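(* For all $1\le k,\alpha,i\le m$, the element $T_{k\alpha i}$ lies in $H^{n-2,2}\oplus H^{n-3,3}$; that is, $T_{k\alpha i}=E_{k\alpha i}+D_kD_\alpha D_i\Omega$ with $E_{k\alpha i}\in H^{n-2,2}$ and $D_kD_\alpha D_i\Omega\in H^{n-3,3}$.
   Context: $\mathcal M$ is the moduli space of polarized Calabi–Yau $n$-folds ($n\ge3$), of complex dimension $m$, with local holomorphic coordinates $z_1,\dots,z_m$, $\partial_i=\partial/\partial z_i$. Locally the primitive middle cohomology of the fibres is identified with one fixed space $H$, carrying the varying Hodge decomposition $H=\bigoplus_{p+q=n}H^{p,q}$. $Q(\phi,\psi)=(-1)^{n(n-1)/2}\int\phi\wedge\psi$, $(\xi,\eta)=(\sqrt{-1})^nQ(\xi,\eta)$. $\Omega$ is a nonzero local holomorphic section of $F^n$. Weil–Petersson metric $g_{i\bar j}=-\partial_i\bar\partial_j\log(\Omega,\bar\Omega)$, Christoffel symbols $\Gamma^k_{ij}=g^{k\bar q}\partial_jg_{i\bar q}$, $K_i=-\partial_i\log(\Omega,\bar\Omega)$, $D_i\Omega=\partial_i\Omega+K_i\Omega$, $D_jD_i\Omega=\partial_jD_i\Omega-\sum_k\Gamma^k_{ij}D_k\Omega+K_jD_i\Omega$, and $T_{k\alpha i}=\partial_kD_\alpha D_i\Omega+K_kD_\alpha D_i\Omega-\sum_p\Gamma^p_{\alpha k}D_pD_i\Omega-\sum_p\Gamma^p_{ik}D_\alpha D_p\Omega$. $D_kD_\alpha D_i\Omega$ denotes the $H^{n-3,3}$-component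 of $T_{k\alpha i}$ and $E_{k\alpha i}=T_{k\alpha i}-D_kD_\alpha D_i\Omega$. *)

theory Defs
  imports "HOL-Analysis.Analysis"
begin

text \<open>Local coordinates z = (z_1,...,z_m) on the moduli space are points of complex^'m
  (CARD('m) = m); the fixed cohomology space H is complex^'d with a fixed real structure
  (componentwise complex conjugation).\<close>

definition vconj :: "complex^'d \<Rightarrow> complex^'d" where
  "vconj v = (\<chi> c. cnj (v $ c))"

definition dre :: "(complex^'m \<Rightarrow> complex) \<Rightarrow> 'm \<Rightarrow> complex^'m \<Rightarrow> complex" where
  "dre f i z = vector_derivative (\<lambda>t::real. f (z + t *\<^sub>R axis i 1)) (at 0)"

definition dim :: "(complex^'m \<Rightarrow> complex) \<Rightarrow> 'm \<Rightarrow> complex^'m \<Rightarrow> complex" where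
  "dim f i z = vector_derivative (\<lambda>t::real. f (z + t *\<^sub>R axis i \<i>)) (at 0)"

definition wd :: "(complex^'m \<Rightarrow> complex) \<Rightarrow> 'm \<Rightarrow> complex^'m \<Rightarrow> complex" where
  "wd f i z = (dre f i z - \<i> * dim f i z) / 2"

definition wdb :: "(complex^'m \<Rightarrow> complex) \<Rightarrow> 'm \<Rightarrow> complex^'m \<Rightarrow> complex" where
  "wdb f i z = (dre f i z + \<i> * dim f i z) / 2"

definition wdv :: "(complex^'m \<Rightarrow> complex^'d) \<Rightarrow> 'm \<Rightarrow> complex^'m \<Rightarrow> complex^'d" where
  "wdv f i z = (\<chi> c. wd (\<lambda>w. f w $ c) i z)"

definition holo :: "(complex^'m) set \<Rightarrow> (complex^'m \<Rightarrow> complex^'d) \<Rightarrow> bool" where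
  "holo V f \<longleftrightarrow> open V \<and> (\<forall>z\<in>V. f differentiable (at z)) \<and>
     (\<forall>z\<in>V. \<forall>i c. wdb (\<lambda>w. f w $ c) i z = 0)"

definition csubspace :: "(complex^'d) set \<Rightarrow> bool" where
  "csubspace S \<longleftrightarrow> 0 \<in> S \<and> (\<forall>x\<in>S. \<forall>y\<in>S. x + y \<in> S) \<and> (\<forall>c. \<forall>x\<in>S. c *s x \<in> S)"

definition cbilinear :: "(complex^'d \<Rightarrow> complex^'d \<Rightarrow> complex) \<Rightarrow> bool" where
  "cbilinear Q \<longleftrightarrow>
     (\<forall>x y z. Q (x + y) z = Q x z + Q y z) \<and> (\<forall>x y z. Q x (y + z) = Q x y + Q x z) \<and>
     (\<forall>c x y. Q (c *s x) y = c * Q x y) \<and> (\<forall>c x y. Q x (c *s y) = c * Q x y)"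

text \<open>Hodge filtration F^p = H^{n,0} + ... + H^{p,n-p}; Hd z p stands for H^{p,n-p} at z.\<close>
definition Fil :: "(complex^'m \<Rightarrow> nat \<Rightarrow> (complex^'d) set) \<Rightarrow> nat \<Rightarrow> complex^'m \<Rightarrow> nat \<Rightarrow> (complex^'d) set" where
  "Fil Hd n z p = {v. \<exists>f. (\<forall>r. f r \<in> Hd z r) \<and> v = (\<Sum>r\<in>{p..n}. f r)}"

text \<open>Polarized variation of Hodge structure of weight n and Calabi--Yau type over the
  coordinate chart U, with holomorphic generator \<Omega> of F^n, whose Kodaira--Spencer map is an
  isomorphism (the z_i are local coordinates of the moduli space).\<close>
definition CY_VHS ::
  "nat \<Rightarrow> (complex^'m) set \<Rightarrow> (complex^'d \<Rightarrow> complex^'d \<Rightarrow> complex) \<Rightarrow>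
   (complex^'m \<Rightarrow> nat \<Rightarrow> (complex^'d) set) \<Rightarrow> (complex^'m \<Rightarrow> complex^'d) \<Rightarrow> bool" where
  "CY_VHS n U Q Hd \<Omega> \<longleftrightarrow>
     open U \<and>
     cbilinear Q \<and>
     (\<forall>x y. Q x y = (-1)^n * Q y x) \<and>
     (\<forall>x y. Q (vconj x) (vconj y) = cnj (Q x y)) \<and>
     (\<forall>z\<in>U.
        (\<forall>p\<le>n. csubspace (Hd z p)) \<and>
        (\<forall>p. n < p \<longrightarrow> Hd z p = {0}) \<and>
        (\<forall>v. \<exists>!f. (\<forall>p. f p \<in> Hd z p) \<and> v = (\<Sum>p\<le>n. f p)) \<and>
        (\<forall>p\<le>n. vconj ` Hd z p = Hd z (n - p)) \<and>
        (\<forall>p\<le>n. \<forall>r\<le>n. p + r \<noteq> n \<longrightarrow> (\<forall>x\<in>Hd z p. \<forall>y\<in>Hd z r. Q x y = 0)) \<and>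
        (\<forall>p\<le>n. \<forall>x\<in>Hd z p. x \<noteq> 0 \<longrightarrow>
            Im (\<i>^p * (-\<i>)^(n-p) * Q x (vconj x)) = 0 \<and>
            Re (\<i>^p * (-\<i>)^(n-p) * Q x (vconj x)) > 0) \<and>
        \<Omega> z \<noteq> 0 \<and> \<Omega> z \<in> Hd z n \<and> (\<forall>x\<in>Hd z n. \<exists>c. x = c *s \<Omega> z) \<and>
        (\<forall>v\<in>Hd z (n - 1). \<exists>!c::'m \<Rightarrow> complex. v - (\<Sum>i\<in>UNIV. c i *s wdv \<Omega> i z) \<in> Hd z n)) \<and>
     holo U \<Omega> \<and>
     (\<forall>V s p. V \<subseteq> U \<longrightarrow> holo V s \<longrightarrow> 1 \<le> p \<longrightarrow> p \<le> n \<longrightarrow>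
        (\<forall>w\<in>V. s w \<in> Fil Hd n w p) \<longrightarrow>
        (\<forall>w\<in>V. \<forall>i. wdv s i w \<in> Fil Hd n w (p - 1)))"

definition pairing :: "nat \<Rightarrow> (complex^'d \<Rightarrow> complex^'d \<Rightarrow> complex) \<Rightarrow> complex^'d \<Rightarrow> complex^'d \<Rightarrow> complex" where
  "pairing n Q x y = \<i>^n * Q x y"

definition logN :: "nat \<Rightarrow> (complex^'d \<Rightarrow> complex^'d \<Rightarrow> complex) \<Rightarrow> (complex^'m \<Rightarrow> complex^'d) \<Rightarrow> complex^'m \<Rightarrow> complex" where
  "logN n Q \<Omega> z = Ln (pairing n Q (\<Omega> z) (vconj (\<Omega> z)))"

definition Kf :: "nat \<Rightarrow> (complex^'d \<Rightarrow> complex^'d \<Rightarrow> complex) \<Rightarrow> (complex^'m \<Rightarrow> complex^'d) \<Rightarrow> 'm \<Rightarrow> complex^'m \<Rightarrow> complex" where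
  "Kf n Q \<Omega> i z = - wd (logN n Q \<Omega>) i z"

definition gWP :: "nat \<Rightarrow> (complex^'d \<Rightarrow> complex^'d \<Rightarrow> complex) \<Rightarrow> (complex^'m \<Rightarrow> complex^'d) \<Rightarrow> 'm \<Rightarrow> 'm \<Rightarrow> complex^'m \<Rightarrow> complex" where
  "gWP n Q \<Omega> i j z = - wd (\<lambda>w. wdb (logN n Q \<Omega>) j w) i z"

text \<open>inverse metric g^{k qbar}, characterised by  sum_q g^{k qbar} g_{p qbar} = delta_{kp}\<close>
definition gInv :: "nat \<Rightarrow> (complex^'d \<Rightarrow> complex^'d \<Rightarrow> complex) \<Rightarrow> (complex^'m \<Rightarrow> complex^'d) \<Rightarrow> 'm \<Rightarrow> 'm \<Rightarrow> complex^'m \<Rightarrow> complex" where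
  "gInv n Q \<Omega> k q z = matrix_inv (transpose (\<chi> i j. gWP n Q \<Omega> i j z)) $ k $ q"

definition Gam :: "nat \<Rightarrow> (complex^'d \<Rightarrow> complex^'d \<Rightarrow> complex) \<Rightarrow> (complex^'m \<Rightarrow> complex^'d) \<Rightarrow> 'm \<Rightarrow> 'm \<Rightarrow> 'm \<Rightarrow> complex^'m \<Rightarrow> complex" where
  "Gam n Q \<Omega> k i j z = (\<Sum>q\<in>UNIV. gInv n Q \<Omega> k q z * wd (gWP n Q \<Omega> i q) j z)"

definition D1 :: "nat \<Rightarrow> (complex^'d \<Rightarrow> complex^'d \<Rightarrow> complex) \<Rightarrow> (complex^'m \<Rightarrow> complex^'d) \<Rightarrow> 'm \<Rightarrow> complex^'m \<Rightarrow> complex^'d" where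
  "D1 n Q \<Omega> i z = wdv \<Omega> i z + Kf n Q \<Omega> i z *s \<Omega> z"

definition D2 :: "nat \<Rightarrow> (complex^'d \<Rightarrow> complex^'d \<Rightarrow> complex) \<Rightarrow> (complex^'m \<Rightarrow> complex^'d) \<Rightarrow> 'm \<Rightarrow> 'm \<Rightarrow> complex^'m \<Rightarrow> complex^'d" where
  "D2 n Q \<Omega> j i z = wdv (D1 n Q \<Omega> i) j z - (\<Sum>k\<in>UNIV. Gam n Q \<Omega> k i j z *s D1 n Q \<Omega> k z)
      + Kf n Q \<Omega> j z *s D1 n Q \<Omega> i z"

definition Tt :: "nat \<Rightarrow> (complex^'d \<Rightarrow> complex^'d \<Rightarrow> complex) \<Rightarrow> (complex^'m \<Rightarrow> complex^'d) \<Rightarrow> 'm \<Rightarrow> 'm \<Rightarrow> 'm \<Rightarrow> complex^'m \<Rightarrow> complex^'d" where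
  "Tt n Q \<Omega> k \<alpha> i z = wdv (D2 n Q \<Omega> \<alpha> i) k z + Kf n Q \<Omega> k z *s D2 n Q \<Omega> \<alpha> i z
      - (\<Sum>p\<in>UNIV. Gam n Q \<Omega> p \<alpha> k z *s D2 n Q \<Omega> p i z)
      - (\<Sum>p\<in>UNIV. Gam n Q \<Omega> p i k z *s D2 n Q \<Omega> \<alpha> p z)"

end

(* T_(k alpha i) lies in F^(n-3): D_alpha D_i Omega is a smooth section of F^(n-2) whose
   holomorphic derivatives stay in F^(n-3) (Griffiths transversality and the Leibniz rule), and
   T_(k alpha i) is built from it and its derivatives. The H^(n,0)- and H^(n-1,1)-components of
   T_(k alpha i) vanish because it is Q-orthogonal to conj Omega and to every conj (D_l Omega): the
   D_l Omega span H^(n-1,1) by the Kodaira-Spencer condition, and Q (x, conj x) is nonzero for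
   every nonzero x in H^(p,q). These orthogonality relations hold for D_alpha D_i Omega by the
   choice of K_i and of the Christoffel symbols, and they survive differentiation because
   dbar Omega = 0 and dbar (D_l Omega) is a multiple of Omega. The analytic input is that
   holomorphic maps of several variables are smooth, which follows from the Cauchy integral
   formula along complex lines by differentiating under the integral sign. *)

theory Submission
  imports Defs "HOL-Complex_Analysis.Cauchy_Integral_Formula"
begin

section \<open>Holomorphic functions of several variables are smooth\<close>

definition cdiff_on :: "(complex^'m) set \<Rightarrow> (complex^'m \<Rightarrow> complex) \<Rightarrow> bool" where
  "cdiff_on U f \<longleftrightarrow> open U \<and>
     (\<forall>z\<in>U. \<exists>L. (f has_derivative L) (at z) \<and> (\<forall>c h. L (c *s h) = c * L h))"

definition cderiv :: "(complex^'m \<Rightarrow> complex) \<Rightarrow> complex^'m \<Rightarrow> complex^'m \<Rightarrow> complex" where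
  "cderiv f z = frechet_derivative f (at z)"

lemma cdiff_on_open: "cdiff_on U f \<Longrightarrow> open U"
  unfolding cdiff_on_def by blast

lemma cdiff_onD:
  assumes "cdiff_on U f" "z \<in> U"
  shows cdiff_on_has_derivative: "(f has_derivative cderiv f z) (at z)"
    and cderiv_smult: "cderiv f z (c *s h) = c * cderiv f z h"
proof -
  obtain L where L: "(f has_derivative L) (at z)" "\<forall>c h. L (c *s h) = c * L h"
    using assms unfolding cdiff_on_def by blast
  moreover have "L = cderiv f z"
    unfolding cderiv_def using frechet_derivative_at[OF L(1)] .
  ultimately show "(f has_derivative cderiv f z) (at z)" "cderiv f z (c *s h) = c * cderiv f z h"
    by auto
qed

lemma cdiff_on_continuous_on: "cdiff_on U f \<Longrightarrow> continuous_on U f"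
  by (meson cdiff_on_has_derivative continuous_at_imp_continuous_on has_derivative_continuous)

lemma cdiff_on_cong:
  assumes "cdiff_on U f" "\<And>w. w \<in> U \<Longrightarrow> f w = g w"
  shows "cdiff_on U g"
  unfolding cdiff_on_def
proof (intro conjI ballI)
  show "open U" using cdiff_on_open[OF assms(1)] .
  fix z assume z: "z \<in> U"
  have "(g has_derivative cderiv f z) (at z)"
    by (rule has_derivative_transform_within_open[OF cdiff_on_has_derivative[OF assms(1) z]
          \<open>open U\<close> z assms(2)])
  then show "\<exists>L. (g has_derivative L) (at z) \<and> (\<forall>c h. L (c *s h) = c * L h)"
    using cderiv_smult[OF assms(1) z] by blast
qed

lemma norm_vector_smult: "norm (c *s (v::complex^'m)) = cmod c * norm v"
  unfolding norm_vec_def by (simp add: norm_mult L2_set_right_distrib)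

lemma bounded_linear_vector_smult_left: "bounded_linear (\<lambda>c::complex. c *s (v::complex^'m))"
proof (rule bounded_linear_intro[where K="norm v"])
  show "(x + y) *s v = x *s v + y *s v" for x y
    by (simp add: vec_eq_iff algebra_simps)
  show "(r *\<^sub>R x) *s v = r *\<^sub>R (x *s v)" for r x
    by (simp add: vec_eq_iff mult_scaleR_left)
  show "norm (x *s v) \<le> norm x * norm v" for x
    by (simp add: norm_vector_smult)
qed

lemma cdiff_on_complex_line:
  assumes f: "cdiff_on U f" and "w + \<zeta> *s v \<in> U"
  shows "((\<lambda>\<zeta>. f (w + \<zeta> *s v)) has_field_derivative cderiv f (w + \<zeta> *s v) v) (at \<zeta>)"
proof -
  have "((\<lambda>\<zeta>. w + \<zeta> *s v) has_derivative (\<lambda>h. h *s v)) (at \<zeta>)"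
    using bounded_linear_imp_has_derivative[OF bounded_linear_vector_smult_left[of v]]
    by (auto intro!: derivative_eq_intros)
  from has_derivative_compose[OF this cdiff_on_has_derivative[OF f assms(2)]]
  moreover have "(\<lambda>h. cderiv f (w + \<zeta> *s v) (h *s v)) = (*) (cderiv f (w + \<zeta> *s v) v)"
    using cderiv_smult[OF f assms(2), of _ v] by (auto simp: fun_eq_iff)
  ultimately show ?thesis
    unfolding has_field_derivative_def by simp
qed

definition circ :: "real \<Rightarrow> real \<Rightarrow> complex" where
  "circ \<rho> t = of_real \<rho> * exp (2 * of_real pi * \<i> * of_real t)"

text \<open>Kernel of the Cauchy formula for a first derivative, pulled back to \<open>t \<in> {0..1}\<close>:
  \<open>d\<zeta> / \<zeta>\<^sup>2 = 2\<pi>i dt / circ \<rho> t\<close>.\<close>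
definition circ_kernel :: "real \<Rightarrow> real \<Rightarrow> complex" where
  "circ_kernel \<rho> t = (2 * of_real pi * \<i>) / circ \<rho> t"

lemma norm_circ: "\<rho> \<ge> 0 \<Longrightarrow> cmod (circ \<rho> t) = \<rho>"
  unfolding circ_def by (simp add: norm_mult)

lemma circ_nonzero: "\<rho> > 0 \<Longrightarrow> circ \<rho> t \<noteq> 0"
  unfolding circ_def by simp

lemma continuous_on_circ [continuous_intros]:
  "continuous_on S g \<Longrightarrow> continuous_on S (\<lambda>x. circ \<rho> (g x))"
  unfolding circ_def by (intro continuous_intros)

lemma continuous_on_circ_kernel [continuous_intros]:
  "\<rho> > 0 \<Longrightarrow> continuous_on S g \<Longrightarrow> continuous_on S (\<lambda>x. circ_kernel \<rho> (g x))"
  unfolding circ_kernel_def by (intro continuous_intros) (auto simp: circ_nonzero)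

lemma continuous_on_vector_smult [continuous_intros]:
  "continuous_on S c \<Longrightarrow> continuous_on S (\<lambda>x. c x *s (v::complex^'m))"
  using bounded_linear.continuous_on[OF bounded_linear_vector_smult_left] by blast

lemma cderiv_Cauchy_integral:
  assumes f: "cdiff_on U f" and \<rho>: "\<rho> > 0"
    and disc: "\<And>\<zeta>. cmod \<zeta> \<le> \<rho> \<Longrightarrow> w + \<zeta> *s v \<in> U"
  shows "(2 * of_real pi * \<i>) * cderiv f w v =
           integral {0..1} (\<lambda>t. f (w + circ \<rho> t *s v) * circ_kernel \<rho> t)"
proof -
  define \<phi> where "\<phi> = (\<lambda>\<zeta>. f (w + \<zeta> *s v))"
  have der: "(\<phi> has_field_derivative cderiv f (w + \<zeta> *s v) v) (at \<zeta>)" if "\<zeta> \<in> cball 0 \<rho>" for \<zeta>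
    unfolding \<phi>_def by (rule cdiff_on_complex_line[OF f disc]) (use that in auto)
  then have hol: "\<phi> holomorphic_on cball 0 \<rho>"
    by (meson field_differentiable_def field_differentiable_at_within holomorphic_on_def)
  have "((\<lambda>u. \<phi> u / (u - 0) ^ Suc 1) has_contour_integral
          ((2 * pi * \<i>) / fact 1 * (deriv ^^ 1) \<phi> 0)) (circlepath 0 \<rho>)"
    by (rule Cauchy_has_contour_integral_higher_derivative_circlepath
          [OF holomorphic_on_imp_continuous_on[OF hol] holomorphic_on_subset[OF hol]])
       (use \<rho> in auto)
  moreover have "deriv \<phi> 0 = cderiv f w v"
    using DERIV_imp_deriv[OF der[of 0]] \<rho> by simp
  ultimately have contour: "((\<lambda>t. \<phi> (circlepath 0 \<rho> t) / (circlepath 0 \<rho> t - 0) ^ Suc 1 *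
                vector_derivative (circlepath 0 \<rho>) (at t within {0..1})) has_integral
            ((2 * pi * \<i>) * cderiv f w v)) {0..1}"
    unfolding has_contour_integral_def by simp
  have integrand: "\<phi> (circlepath 0 \<rho> t) / (circlepath 0 \<rho> t - 0) ^ Suc 1 *
                   vector_derivative (circlepath 0 \<rho>) (at t within {0..1}) =
                 f (w + circ \<rho> t *s v) * circ_kernel \<rho> t" if "t \<in> {0..1}" for t
  proof -
    have "circlepath 0 \<rho> t = circ \<rho> t"
      by (simp add: circlepath circ_def)
    moreover have "vector_derivative (circlepath 0 \<rho>) (at t within {0..1}) =
                     2 * of_real pi * \<i> * circ \<rho> t"
      using vector_derivative_circlepath01[of t 0 \<rho>] that by (simp add: circ_def)
    ultimately show ?thesis
      unfolding \<phi>_def circ_kernel_def using circ_nonzero[OF \<rho>, of t]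
      by (simp add: field_simps power2_eq_square)
  qed
  from has_integral_eq[OF integrand contour]
  show ?thesis
    by (simp add: integral_unique)
qed

lemma small_disc_in_open:
  assumes "open U" "z \<in> U"
  obtains \<epsilon> \<rho> :: real where "\<epsilon> > 0" "\<rho> > 0" "ball z \<epsilon> \<subseteq> U"
    "\<And>w \<zeta>. w \<in> ball z \<epsilon> \<Longrightarrow> cmod \<zeta> \<le> \<rho> \<Longrightarrow> w + \<zeta> *s v \<in> U"
proof -
  obtain e where e: "e > 0" "ball z e \<subseteq> U" using openE[OF assms] by blast
  define \<rho> where "\<rho> = e / (2 * (norm v + 1))"
  have \<rho>: "\<rho> > 0"
    unfolding \<rho>_def using e by (intro divide_pos_pos) (auto intro: add_nonneg_pos)
  have "\<rho> * norm v = (e / 2) * (norm v / (norm v + 1))"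
    by (simp add: \<rho>_def)
  also have "\<dots> \<le> e / 2"
    using e(1) by (intro mult_left_le) (auto simp: divide_le_eq_1 add_nonneg_pos)
  finally have \<rho>v: "\<rho> * norm v \<le> e / 2" .
  have "w + \<zeta> *s v \<in> U" if w: "w \<in> ball z (e / 2)" and \<zeta>: "cmod \<zeta> \<le> \<rho>" for w \<zeta>
  proof -
    have "norm (\<zeta> *s v) \<le> \<rho> * norm v"
      unfolding norm_vector_smult by (intro mult_right_mono \<zeta>) auto
    moreover have "dist z (w + \<zeta> *s v) \<le> dist z w + norm (\<zeta> *s v)"
      using norm_triangle_ineq[of "w - z" "\<zeta> *s v"]
      by (simp add: dist_norm norm_minus_commute[of z] algebra_simps)
    ultimately have "dist z (w + \<zeta> *s v) < e"
      using w \<rho>v by simp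
    then show ?thesis using e by auto
  qed
  moreover have "ball z (e / 2) \<subseteq> U" using e by auto
  ultimately show ?thesis
    using e(1) \<rho> by (intro that[of "e / 2" \<rho>]) auto
qed

lemma continuous_on_Cauchy_integrand:
  assumes g: "continuous_on U g" and \<rho>: "\<rho> > 0"
    and circle: "\<And>w t. w \<in> B \<Longrightarrow> w + circ \<rho> t *s v \<in> U"
  shows "continuous_on (B \<times> S) (\<lambda>(w, t). g (w + circ \<rho> t *s v) * circ_kernel \<rho> t)"
proof -
  have "continuous_on (B \<times> S) (\<lambda>x. g (fst x + circ \<rho> (snd x) *s v) * circ_kernel \<rho> (snd x))"
    by (intro continuous_on_mult continuous_on_compose2[OF g] continuous_intros \<rho>)
       (use circle in auto)
  then show ?thesis by (simp add: case_prod_beta')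
qed

lemma continuous_on_cderiv:
  assumes f: "cdiff_on U f"
  shows "continuous_on U (\<lambda>w. cderiv f w v)"
proof -
  have "isCont (\<lambda>w. cderiv f w v) z" if z: "z \<in> U" for z
  proof -
    obtain \<epsilon> \<rho> :: real where "\<epsilon> > 0" "\<rho> > 0" "ball z \<epsilon> \<subseteq> U"
      and disc: "\<And>w \<zeta>. w \<in> ball z \<epsilon> \<Longrightarrow> cmod \<zeta> \<le> \<rho> \<Longrightarrow> w + \<zeta> *s v \<in> U"
      using small_disc_in_open[OF cdiff_on_open[OF f] z] by blast
    have rep: "cderiv f w v =
        integral (cbox 0 1) (\<lambda>t. f (w + circ \<rho> t *s v) * circ_kernel \<rho> t) / (2 * of_real pi * \<i>)"
      if "w \<in> ball z \<epsilon>" for w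
      using cderiv_Cauchy_integral[OF f \<open>\<rho> > 0\<close>, of w v] disc[OF that]
      by (simp add: field_simps)
    have "continuous_on (ball z \<epsilon>)
            (\<lambda>w. integral (cbox 0 1) (\<lambda>t. f (w + circ \<rho> t *s v) * circ_kernel \<rho> t))"
      using disc norm_circ \<open>\<rho> > 0\<close>
      by (intro integral_continuous_on_param continuous_on_Cauchy_integrand[OF cdiff_on_continuous_on[OF f]])
         auto
    then have "continuous_on (ball z \<epsilon>) (\<lambda>w.
        integral (cbox 0 1) (\<lambda>t. f (w + circ \<rho> t *s v) * circ_kernel \<rho> t) / (2 * of_real pi * \<i>))"
      by (intro continuous_intros) auto
    then have "continuous_on (ball z \<epsilon>) (\<lambda>w. cderiv f w v)"
      by (rule continuous_on_eq) (simp add: rep)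
    then show ?thesis
      using \<open>\<epsilon> > 0\<close> by (simp add: continuous_on_eq_continuous_at)
  qed
  then show ?thesis by (simp add: continuous_at_imp_continuous_on)
qed

lemma has_derivative_Cauchy_integral:
  assumes f: "cdiff_on U f" and \<rho>: "\<rho> > 0" and B: "open B" "convex B" "z \<in> B"
    and circle: "\<And>w t. w \<in> B \<Longrightarrow> w + circ \<rho> t *s v \<in> U"
  shows "((\<lambda>w. integral (cbox 0 1) (\<lambda>t. f (w + circ \<rho> t *s v) * circ_kernel \<rho> t)) has_derivative
           (\<lambda>h. integral (cbox 0 1) (\<lambda>t. cderiv f (z + circ \<rho> t *s v) h * circ_kernel \<rho> t))) (at z)"
proof -
  define H where "H = (\<lambda>w t. f (w + circ \<rho> t *s v) * circ_kernel \<rho> t)"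
  define H' where "H' = (\<lambda>w t. Blinfun (\<lambda>h. cderiv f (w + circ \<rho> t *s v) h * circ_kernel \<rho> t))"
  have H'_apply: "blinfun_apply (H' w t) = (\<lambda>h. cderiv f (w + circ \<rho> t *s v) h * circ_kernel \<rho> t)"
    if "w \<in> B" for w t
    unfolding H'_def using cdiff_on_has_derivative[OF f circle[OF that]]
    by (intro bounded_linear_Blinfun_apply bounded_linear_compose[OF bounded_linear_mult_left])
       (rule has_derivative_bounded_linear)
  have deriv_H: "((\<lambda>w. H w t) has_derivative blinfun_apply (H' w t)) (at w within B)"
    if "w \<in> B" for w t
  proof -
    have "((\<lambda>w. w + circ \<rho> t *s v) has_derivative (\<lambda>h. h)) (at w within B)"
      by (auto intro!: derivative_eq_intros)
    from has_derivative_mult_left[OF has_derivative_compose[OF this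
          cdiff_on_has_derivative[OF f circle[OF that]]]]
    show ?thesis unfolding H'_apply[OF that] H_def .
  qed
  have cont_H: "continuous_on (B \<times> cbox 0 1) (\<lambda>(w, t). H w t)"
    unfolding H_def by (rule continuous_on_Cauchy_integrand[OF cdiff_on_continuous_on[OF f] \<rho> circle])
  then have int_H: "H w integrable_on cbox 0 1" if "w \<in> B" for w
    by (intro integrable_continuous continuous_on_compose2[OF cont_H, of _ "\<lambda>t. (w, t)", simplified])
       (auto intro!: continuous_intros simp: that)
  have cont_H': "continuous_on (B \<times> cbox 0 1) (\<lambda>(w, t). H' w t)"
  proof (rule continuous_on_blinfun_componentwise)
    fix i
    have "continuous_on (B \<times> cbox 0 1)
            (\<lambda>(w, t). cderiv f (w + circ \<rho> t *s v) i * circ_kernel \<rho> t)"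
      by (rule continuous_on_Cauchy_integrand[OF continuous_on_cderiv[OF f] \<rho> circle])
    then show "continuous_on (B \<times> cbox 0 1) (\<lambda>x. blinfun_apply (case x of (w, t) \<Rightarrow> H' w t) i)"
      by (rule continuous_on_eq) (auto simp: H'_apply)
  qed
  have "((\<lambda>w. integral (cbox 0 1) (H w)) has_derivative
                     blinfun_apply (integral (cbox 0 1) (H' z))) (at z within B)"
    by (rule leibniz_rule[OF deriv_H int_H cont_H' B(3,2)])
  then have "((\<lambda>w. integral (cbox 0 1) (H w)) has_derivative
                blinfun_apply (integral (cbox 0 1) (H' z))) (at z)"
    using at_within_open[OF B(3,1)] by simp
  moreover have "blinfun_apply (integral (cbox 0 1) (H' z)) =
      (\<lambda>h. integral (cbox 0 1) (\<lambda>t. cderiv f (z + circ \<rho> t *s v) h * circ_kernel \<rho> t))"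
  proof
    fix h
    have "H' z integrable_on cbox 0 1"
      by (intro integrable_continuous continuous_on_compose2[OF cont_H', of _ "\<lambda>t. (z, t)", simplified])
         (auto intro!: continuous_intros simp: B)
    from blinfun_apply_integral[OF this]
    show "blinfun_apply (integral (cbox 0 1) (H' z)) h =
            integral (cbox 0 1) (\<lambda>t. cderiv f (z + circ \<rho> t *s v) h * circ_kernel \<rho> t)"
      by (simp add: H'_apply[OF B(3)])
  qed
  ultimately show ?thesis
    unfolding H_def by simp
qed

lemma cdiff_on_cderiv:
  assumes f: "cdiff_on U f"
  shows "cdiff_on U (\<lambda>w. cderiv f w v)"
  unfolding cdiff_on_def
proof (intro conjI ballI)
  show "open U" using cdiff_on_open[OF f] .
  fix z assume z: "z \<in> U"
  obtain \<epsilon> \<rho> :: real where "\<epsilon> > 0" "\<rho> > 0" "ball z \<epsilon> \<subseteq> U"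
    and disc: "\<And>w \<zeta>. w \<in> ball z \<epsilon> \<Longrightarrow> cmod \<zeta> \<le> \<rho> \<Longrightarrow> w + \<zeta> *s v \<in> U"
    using small_disc_in_open[OF \<open>open U\<close> z] by blast
  define c where "c = 1 / (2 * of_real pi * \<i> :: complex)"
  define L where "L = (\<lambda>h. integral (cbox 0 1)
                   (\<lambda>t. cderiv f (z + circ \<rho> t *s v) h * circ_kernel \<rho> t) * c)"
  have circle: "w + circ \<rho> t *s v \<in> U" if "w \<in> ball z \<epsilon>" for w t
    using disc[OF that] norm_circ \<open>\<rho> > 0\<close> by simp
  have z_ball: "z \<in> ball z \<epsilon>"
    using \<open>\<epsilon> > 0\<close> by simp
  have "((\<lambda>w. integral (cbox 0 1) (\<lambda>t. f (w + circ \<rho> t *s v) * circ_kernel \<rho> t) * c)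
           has_derivative L) (at z)"
    unfolding L_def
    by (rule has_derivative_mult_left
          [OF has_derivative_Cauchy_integral[OF f \<open>\<rho> > 0\<close> open_ball convex_ball z_ball circle]])
  moreover have "integral (cbox 0 1) (\<lambda>t. f (w + circ \<rho> t *s v) * circ_kernel \<rho> t) * c =
                   cderiv f w v" if "w \<in> ball z \<epsilon>" for w
    using cderiv_Cauchy_integral[OF f \<open>\<rho> > 0\<close>, of w v] disc[OF that]
    by (simp add: c_def field_simps)
  ultimately have "((\<lambda>w. cderiv f w v) has_derivative L) (at z)"
    by (rule has_derivative_transform_within_open[OF _ open_ball z_ball])
  moreover have "L (a *s h) = a * L h" for a h
    unfolding L_def using cderiv_smult[OF f circle[OF z_ball]] by (simp add: mult.assoc)
  ultimately show "\<exists>L. ((\<lambda>w. cderiv f w v) has_derivative L) (at z) \<and> (\<forall>a h. L (a *s h) = a * L h)"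
    by blast
qed

section \<open>Directional derivatives and smoothness\<close>

definition dir_deriv :: "complex^'m \<Rightarrow> (complex^'m \<Rightarrow> complex) \<Rightarrow> complex^'m \<Rightarrow> complex" where
  "dir_deriv e f z = vector_derivative (\<lambda>t::real. f (z + t *\<^sub>R e)) (at 0)"

definition dir_differentiable :: "complex^'m \<Rightarrow> (complex^'m \<Rightarrow> complex) \<Rightarrow> complex^'m \<Rightarrow> bool" where
  "dir_differentiable e f z \<longleftrightarrow> (\<lambda>t::real. f (z + t *\<^sub>R e)) differentiable (at 0)"

lemma dir_deriv_works:
  "dir_differentiable e f z \<Longrightarrow>
     ((\<lambda>t::real. f (z + t *\<^sub>R e)) has_vector_derivative dir_deriv e f z) (at 0)"
  unfolding dir_differentiable_def dir_deriv_def using vector_derivative_works by blast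

lemma dir_deriv_intro:
  "((\<lambda>t::real. f (z + t *\<^sub>R e)) has_vector_derivative d) (at 0) \<Longrightarrow>
     dir_differentiable e f z \<and> dir_deriv e f z = d"
  unfolding dir_differentiable_def dir_deriv_def
  using vector_derivative_at differentiableI_vector by blast

lemma has_derivative_dir_deriv:
  assumes "(f has_derivative L) (at z)"
  shows "dir_differentiable e f z \<and> dir_deriv e f z = L e"
proof (rule dir_deriv_intro)
  have "((\<lambda>t::real. z + t *\<^sub>R e) has_derivative (\<lambda>t. t *\<^sub>R e)) (at 0)"
    by (auto intro!: derivative_eq_intros)
  from has_derivative_compose[OF this, of f L] assms
  have "((\<lambda>t::real. f (z + t *\<^sub>R e)) has_derivative (\<lambda>t. L (t *\<^sub>R e))) (at 0)"
    by simp
  then show "((\<lambda>t::real. f (z + t *\<^sub>R e)) has_vector_derivative L e) (at 0)"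
    unfolding has_vector_derivative_def
    using linear_scale[OF has_derivative_linear[OF assms]] by simp
qed

lemma dir_deriv_const: "dir_differentiable e (\<lambda>w. c) z \<and> dir_deriv e (\<lambda>w. c) z = 0"
  by (rule dir_deriv_intro) simp

lemma dir_deriv_add:
  "dir_differentiable e f z \<Longrightarrow> dir_differentiable e g z \<Longrightarrow>
     dir_differentiable e (\<lambda>w. f w + g w) z \<and>
     dir_deriv e (\<lambda>w. f w + g w) z = dir_deriv e f z + dir_deriv e g z"
  by (rule dir_deriv_intro) (intro has_vector_derivative_add dir_deriv_works)

lemma dir_deriv_mult:
  "dir_differentiable e f z \<Longrightarrow> dir_differentiable e g z \<Longrightarrow>
     dir_differentiable e (\<lambda>w. f w * g w) z \<and>
     dir_deriv e (\<lambda>w. f w * g w) z = dir_deriv e f z * g z + f z * dir_deriv e g z"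
proof (rule dir_deriv_intro)
  assume "dir_differentiable e f z" "dir_differentiable e g z"
  from has_vector_derivative_mult[OF dir_deriv_works[OF this(1)] dir_deriv_works[OF this(2)]]
  show "((\<lambda>t. f (z + t *\<^sub>R e) * g (z + t *\<^sub>R e)) has_vector_derivative
          dir_deriv e f z * g z + f z * dir_deriv e g z) (at 0)"
    by (simp add: add.commute)
qed

lemma dir_deriv_cnj:
  "dir_differentiable e f z \<Longrightarrow>
     dir_differentiable e (\<lambda>w. cnj (f w)) z \<and> dir_deriv e (\<lambda>w. cnj (f w)) z = cnj (dir_deriv e f z)"
  by (rule dir_deriv_intro) (intro has_vector_derivative_cnj dir_deriv_works)

lemma dir_deriv_inverse:
  assumes "dir_differentiable e f z" "f z \<noteq> 0"
  shows "dir_differentiable e (\<lambda>w. inverse (f w)) z \<and>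
    dir_deriv e (\<lambda>w. inverse (f w)) z = - dir_deriv e f z * (inverse (f z) * inverse (f z))"
proof (rule dir_deriv_intro)
  have "(inverse has_field_derivative - (inverse (f z) ^ 2)) (at ((\<lambda>t::real. f (z + t *\<^sub>R e)) 0))"
    using DERIV_inverse[of "f z" UNIV] assms(2) by (simp add: power2_eq_square)
  from field_vector_diff_chain_at[OF dir_deriv_works[OF assms(1)] this]
  show "((\<lambda>t. inverse (f (z + t *\<^sub>R e))) has_vector_derivative
          - dir_deriv e f z * (inverse (f z) * inverse (f z))) (at 0)"
    by (simp add: o_def power2_eq_square)
qed

lemma dir_deriv_Ln:
  assumes "dir_differentiable e f z" "f z \<notin> \<real>\<^sub>\<le>\<^sub>0"
  shows "dir_differentiable e (\<lambda>w. Ln (f w)) z \<and>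
    dir_deriv e (\<lambda>w. Ln (f w)) z = dir_deriv e f z * inverse (f z)"
proof (rule dir_deriv_intro)
  have "(Ln has_field_derivative inverse (f z)) (at ((\<lambda>t::real. f (z + t *\<^sub>R e)) 0))"
    using has_field_derivative_Ln[of "f z"] assms(2) by simp
  from field_vector_diff_chain_at[OF dir_deriv_works[OF assms(1)] this]
  show "((\<lambda>t. Ln (f (z + t *\<^sub>R e))) has_vector_derivative dir_deriv e f z * inverse (f z)) (at 0)"
    by (simp add: o_def)
qed

lemma dir_deriv_cong:
  assumes "open U" "z \<in> U" and eq: "\<And>w. w \<in> U \<Longrightarrow> f w = g w"
  shows "(dir_differentiable e f z \<longleftrightarrow> dir_differentiable e g z) \<and> dir_deriv e f z = dir_deriv e g z"
proof -
  define S where "S = {t::real. z + t *\<^sub>R e \<in> U}"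
  have "open S"
    unfolding S_def
    by (rule open_vimage[OF \<open>open U\<close>, of "\<lambda>t. z + t *\<^sub>R e", unfolded vimage_def])
       (intro continuous_intros)
  moreover have "0 \<in> S" using \<open>z \<in> U\<close> by (simp add: S_def)
  moreover have "f (z + t *\<^sub>R e) = g (z + t *\<^sub>R e)" if "t \<in> S" for t
    using eq that by (simp add: S_def)
  ultimately have iff: "((\<lambda>t::real. f (z + t *\<^sub>R e)) has_vector_derivative d) (at 0) \<longleftrightarrow>
                   ((\<lambda>t::real. g (z + t *\<^sub>R e)) has_vector_derivative d) (at 0)" for d
    by (auto intro: has_vector_derivative_transform_within_open)
  have "dir_deriv e f z = dir_deriv e g z"
    unfolding dir_deriv_def vector_derivative_def using iff by simp
  moreover have "dir_differentiable e f z \<longleftrightarrow> dir_differentiable e g z"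
    unfolding dir_differentiable_def using iff vector_derivative_works differentiableI_vector by blast
  ultimately show ?thesis by simp
qed

fun dir_smooth :: "nat \<Rightarrow> (complex^'m) set \<Rightarrow> (complex^'m \<Rightarrow> complex) \<Rightarrow> bool" where
  "dir_smooth 0 U f = True"
| "dir_smooth (Suc k) U f \<longleftrightarrow>
     (\<forall>z\<in>U. \<forall>e. dir_differentiable e f z) \<and> (\<forall>e. dir_smooth k U (dir_deriv e f))"

definition smooth_on :: "(complex^'m) set \<Rightarrow> (complex^'m \<Rightarrow> complex) \<Rightarrow> bool" where
  "smooth_on U f \<longleftrightarrow> open U \<and> (\<forall>k. dir_smooth k U f)"

lemma dir_smooth_cong:
  "open U \<Longrightarrow> (\<And>w. w \<in> U \<Longrightarrow> f w = g w) \<Longrightarrow> dir_smooth k U f \<Longrightarrow> dir_smooth k U g"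
proof (induction k arbitrary: f g)
  case (Suc k)
  have "dir_smooth k U (dir_deriv e g)" for e
  proof (rule Suc.IH[OF Suc.prems(1)])
    show "dir_smooth k U (dir_deriv e f)" using Suc.prems by simp
    show "dir_deriv e f w = dir_deriv e g w" if "w \<in> U" for w
      using dir_deriv_cong[OF Suc.prems(1) that Suc.prems(2)] by auto
  qed
  then show ?case
    using Suc.prems dir_deriv_cong[OF Suc.prems(1) _ Suc.prems(2)] by auto
qed simp

lemma dir_smooth_Suc_imp: "dir_smooth (Suc k) U f \<Longrightarrow> dir_smooth k U f"
  by (induction k arbitrary: f) auto

lemma dir_smooth_const: "dir_smooth k U (\<lambda>w. c)"
proof (induction k arbitrary: c)
  case (Suc k)
  have deriv_const: "dir_deriv e (\<lambda>w. c) = (\<lambda>w. 0)" for e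
    using dir_deriv_const by (auto simp: fun_eq_iff)
  show ?case by (simp add: deriv_const dir_deriv_const Suc.IH)
qed simp

lemma dir_smooth_add:
  "open U \<Longrightarrow> dir_smooth k U f \<Longrightarrow> dir_smooth k U g \<Longrightarrow> dir_smooth k U (\<lambda>w. f w + g w)"
proof (induction k arbitrary: f g)
  case (Suc k)
  have "dir_smooth k U (dir_deriv e (\<lambda>w. f w + g w))" for e
  proof (rule dir_smooth_cong[OF Suc.prems(1)])
    show "dir_smooth k U (\<lambda>w. dir_deriv e f w + dir_deriv e g w)" using Suc by simp
    show "dir_deriv e f w + dir_deriv e g w = dir_deriv e (\<lambda>w. f w + g w) w" if "w \<in> U" for w
      using dir_deriv_add[of e f w g] Suc.prems that by simp
  qed
  then show ?case using Suc.prems by (auto simp: dir_deriv_add)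
qed simp

lemma dir_smooth_cnj: "open U \<Longrightarrow> dir_smooth k U f \<Longrightarrow> dir_smooth k U (\<lambda>w. cnj (f w))"
proof (induction k arbitrary: f)
  case (Suc k)
  have "dir_smooth k U (dir_deriv e (\<lambda>w. cnj (f w)))" for e
  proof (rule dir_smooth_cong[OF Suc.prems(1)])
    show "dir_smooth k U (\<lambda>w. cnj (dir_deriv e f w))" using Suc by simp
    show "cnj (dir_deriv e f w) = dir_deriv e (\<lambda>w. cnj (f w)) w" if "w \<in> U" for w
      using dir_deriv_cnj[of e f w] Suc.prems that by simp
  qed
  then show ?case using Suc.prems by (auto simp: dir_deriv_cnj)
qed simp

lemma dir_smooth_mult:
  "open U \<Longrightarrow> dir_smooth k U f \<Longrightarrow> dir_smooth k U g \<Longrightarrow> dir_smooth k U (\<lambda>w. f w * g w)"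
proof (induction k arbitrary: f g)
  case (Suc k)
  have "dir_smooth k U (dir_deriv e (\<lambda>w. f w * g w))" for e
  proof (rule dir_smooth_cong[OF Suc.prems(1)])
    have "dir_smooth k U f" "dir_smooth k U g"
      using Suc.prems dir_smooth_Suc_imp by blast+
    then show "dir_smooth k U (\<lambda>w. dir_deriv e f w * g w + f w * dir_deriv e g w)"
      using Suc by (intro dir_smooth_add Suc.IH) auto
    show "dir_deriv e f w * g w + f w * dir_deriv e g w = dir_deriv e (\<lambda>w. f w * g w) w"
      if "w \<in> U" for w
      using dir_deriv_mult[of e f w g] Suc.prems that by simp
  qed
  then show ?case using Suc.prems by (auto simp: dir_deriv_mult)
qed simp

lemma dir_smooth_inverse:
  "open U \<Longrightarrow> dir_smooth k U f \<Longrightarrow> (\<And>w. w \<in> U \<Longrightarrow> f w \<noteq> 0) \<Longrightarrow>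
     dir_smooth k U (\<lambda>w. inverse (f w))"
proof (induction k arbitrary: f)
  case (Suc k)
  have "dir_smooth k U (dir_deriv e (\<lambda>w. inverse (f w)))" for e
  proof (rule dir_smooth_cong[OF Suc.prems(1)])
    have "dir_smooth k U f" using Suc.prems dir_smooth_Suc_imp by blast
    then show "dir_smooth k U (\<lambda>w. (- 1) * dir_deriv e f w * (inverse (f w) * inverse (f w)))"
      using Suc.prems by (intro dir_smooth_mult dir_smooth_const Suc.IH) auto
    show "(- 1) * dir_deriv e f w * (inverse (f w) * inverse (f w)) =
            dir_deriv e (\<lambda>w. inverse (f w)) w" if "w \<in> U" for w
      using dir_deriv_inverse[of e f w] Suc.prems that by simp
  qed
  then show ?case using Suc.prems by (auto simp: dir_deriv_inverse)
qed simp

lemma dir_smooth_Ln: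
  assumes "open U" "dir_smooth k U f" "\<And>w. w \<in> U \<Longrightarrow> f w \<notin> \<real>\<^sub>\<le>\<^sub>0"
  shows "dir_smooth k U (\<lambda>w. Ln (f w))"
proof (cases k)
  case (Suc k')
  have nonzero: "f w \<noteq> 0" if "w \<in> U" for w
    using assms(3)[OF that] by auto
  have "dir_smooth k' U (dir_deriv e (\<lambda>w. Ln (f w)))" for e
  proof (rule dir_smooth_cong[OF assms(1)])
    have "dir_smooth k' U f" using assms(2) Suc dir_smooth_Suc_imp by blast
    then show "dir_smooth k' U (\<lambda>w. dir_deriv e f w * inverse (f w))"
      using assms Suc nonzero by (intro dir_smooth_mult dir_smooth_inverse) auto
    show "dir_deriv e f w * inverse (f w) = dir_deriv e (\<lambda>w. Ln (f w)) w" if "w \<in> U" for w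
      using dir_deriv_Ln[of e f w] assms Suc that by simp
  qed
  then show ?thesis using assms Suc by (auto simp: dir_deriv_Ln)
qed simp

lemma cdiff_on_dir_smooth: "cdiff_on U f \<Longrightarrow> dir_smooth k U f"
proof (induction k arbitrary: f)
  case (Suc k)
  have "dir_smooth k U (dir_deriv e f)" for e
  proof (rule dir_smooth_cong[OF cdiff_on_open[OF Suc.prems]])
    show "dir_smooth k U (\<lambda>w. cderiv f w e)"
      by (rule Suc.IH[OF cdiff_on_cderiv[OF Suc.prems]])
    show "cderiv f w e = dir_deriv e f w" if "w \<in> U" for w
      using has_derivative_dir_deriv[OF cdiff_on_has_derivative[OF Suc.prems that]] by simp
  qed
  then show ?case
    using has_derivative_dir_deriv[OF cdiff_on_has_derivative[OF Suc.prems]] by simp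
qed simp

lemma smooth_on_open: "smooth_on U f \<Longrightarrow> open U"
  unfolding smooth_on_def by blast

lemma smooth_on_dir_differentiable: "smooth_on U f \<Longrightarrow> z \<in> U \<Longrightarrow> dir_differentiable e f z"
  unfolding smooth_on_def by (metis dir_smooth.simps(2))

lemma smooth_on_dir_deriv: "smooth_on U f \<Longrightarrow> smooth_on U (dir_deriv e f)"
  unfolding smooth_on_def by (metis dir_smooth.simps(2))

lemma smooth_on_cong: "smooth_on U f \<Longrightarrow> (\<And>w. w \<in> U \<Longrightarrow> f w = g w) \<Longrightarrow> smooth_on U g"
  unfolding smooth_on_def using dir_smooth_cong by blast

lemma smooth_on_const: "open U \<Longrightarrow> smooth_on U (\<lambda>w. c)"
  unfolding smooth_on_def using dir_smooth_const by blast

lemma smooth_on_add: "smooth_on U f \<Longrightarrow> smooth_on U g \<Longrightarrow> smooth_on U (\<lambda>w. f w + g w)"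
  unfolding smooth_on_def using dir_smooth_add by blast

lemma smooth_on_mult: "smooth_on U f \<Longrightarrow> smooth_on U g \<Longrightarrow> smooth_on U (\<lambda>w. f w * g w)"
  unfolding smooth_on_def using dir_smooth_mult by blast

lemma smooth_on_cnj: "smooth_on U f \<Longrightarrow> smooth_on U (\<lambda>w. cnj (f w))"
  unfolding smooth_on_def using dir_smooth_cnj by blast

lemma smooth_on_inverse:
  "smooth_on U f \<Longrightarrow> (\<And>w. w \<in> U \<Longrightarrow> f w \<noteq> 0) \<Longrightarrow> smooth_on U (\<lambda>w. inverse (f w))"
  unfolding smooth_on_def using dir_smooth_inverse by blast

lemma smooth_on_Ln:
  "smooth_on U f \<Longrightarrow> (\<And>w. w \<in> U \<Longrightarrow> f w \<notin> \<real>\<^sub>\<le>\<^sub>0) \<Longrightarrow> smooth_on U (\<lambda>w. Ln (f w))"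
  unfolding smooth_on_def using dir_smooth_Ln by blast

lemma cdiff_on_smooth_on: "cdiff_on U f \<Longrightarrow> smooth_on U f"
  unfolding smooth_on_def using cdiff_on_dir_smooth cdiff_on_open by blast

lemma smooth_on_minus: "smooth_on U f \<Longrightarrow> smooth_on U (\<lambda>w. - f w)"
  using smooth_on_mult[of U "\<lambda>w. - 1" f] smooth_on_const[of U "- 1"] smooth_on_open by auto

lemma smooth_on_diff: "smooth_on U f \<Longrightarrow> smooth_on U g \<Longrightarrow> smooth_on U (\<lambda>w. f w - g w)"
  using smooth_on_add[OF _ smooth_on_minus, of U f g] by simp

lemma smooth_on_divide:
  "smooth_on U f \<Longrightarrow> smooth_on U g \<Longrightarrow> (\<And>w. w \<in> U \<Longrightarrow> g w \<noteq> 0) \<Longrightarrow>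
     smooth_on U (\<lambda>w. f w / g w)"
  using smooth_on_mult[OF _ smooth_on_inverse, of U f g] by (simp add: divide_inverse)

lemma smooth_on_sum:
  "open U \<Longrightarrow> (\<And>i. i \<in> S \<Longrightarrow> smooth_on U (f i)) \<Longrightarrow> smooth_on U (\<lambda>w. \<Sum>i\<in>S. f i w)"
  by (induction S rule: infinite_finite_induct) (auto intro: smooth_on_const smooth_on_add)

lemma smooth_on_prod:
  "open U \<Longrightarrow> (\<And>i. i \<in> S \<Longrightarrow> smooth_on U (f i)) \<Longrightarrow> smooth_on U (\<lambda>w. \<Prod>i\<in>S. f i w)"
  by (induction S rule: infinite_finite_induct) (auto intro: smooth_on_const smooth_on_mult)

definition dirs_differentiable :: "(complex^'m \<Rightarrow> complex) \<Rightarrow> complex^'m \<Rightarrow> bool" where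
  "dirs_differentiable f z \<longleftrightarrow> (\<forall>e. dir_differentiable e f z)"

lemma smooth_on_dirs_differentiable: "smooth_on U f \<Longrightarrow> z \<in> U \<Longrightarrow> dirs_differentiable f z"
  unfolding dirs_differentiable_def using smooth_on_dir_differentiable by blast

lemma dirs_differentiable_const: "dirs_differentiable (\<lambda>w. c) z"
  unfolding dirs_differentiable_def using dir_deriv_const by blast

lemma dirs_differentiable_add:
  "dirs_differentiable f z \<Longrightarrow> dirs_differentiable g z \<Longrightarrow> dirs_differentiable (\<lambda>w. f w + g w) z"
  unfolding dirs_differentiable_def using dir_deriv_add by blast

lemma dirs_differentiable_mult:
  "dirs_differentiable f z \<Longrightarrow> dirs_differentiable g z \<Longrightarrow> dirs_differentiable (\<lambda>w. f w * g w) z"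
  unfolding dirs_differentiable_def using dir_deriv_mult by blast

lemma dirs_differentiable_cnj: "dirs_differentiable f z \<Longrightarrow> dirs_differentiable (\<lambda>w. cnj (f w)) z"
  unfolding dirs_differentiable_def using dir_deriv_cnj by blast

lemma dirs_differentiable_sum:
  "(\<And>q. q \<in> S \<Longrightarrow> dirs_differentiable (f q) z) \<Longrightarrow> dirs_differentiable (\<lambda>w. \<Sum>q\<in>S. f q w) z"
  by (induction S rule: infinite_finite_induct)
     (auto intro: dirs_differentiable_const dirs_differentiable_add)

section \<open>Wirtinger derivatives\<close>

definition wirt :: "complex \<Rightarrow> (complex^'m \<Rightarrow> complex) \<Rightarrow> 'm \<Rightarrow> complex^'m \<Rightarrow> complex" where
  "wirt s f i z = (dir_deriv (axis i 1) f z + s * dir_deriv (axis i \<i>) f z) / 2"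

lemma wd_eq_wirt: "wd f i z = wirt (- \<i>) f i z"
  unfolding wd_def wirt_def dre_def dim_def dir_deriv_def by simp

lemma wdb_eq_wirt: "wdb f i z = wirt \<i> f i z"
  unfolding wdb_def wirt_def dre_def dim_def dir_deriv_def by simp

lemma smooth_on_wirt: "smooth_on U f \<Longrightarrow> smooth_on U (wirt s f i)"
  unfolding wirt_def divide_inverse
  by (intro smooth_on_mult smooth_on_add smooth_on_dir_deriv smooth_on_const smooth_on_open)

lemma wirt_const: "wirt s (\<lambda>w. c) i z = 0"
  unfolding wirt_def by (simp add: dir_deriv_const)

lemma wirt_add:
  "dirs_differentiable f z \<Longrightarrow> dirs_differentiable g z \<Longrightarrow>
     wirt s (\<lambda>w. f w + g w) i z = wirt s f i z + wirt s g i z"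
  unfolding wirt_def dirs_differentiable_def by (simp add: dir_deriv_add field_simps)

lemma wirt_mult:
  "dirs_differentiable f z \<Longrightarrow> dirs_differentiable g z \<Longrightarrow>
     wirt s (\<lambda>w. f w * g w) i z = wirt s f i z * g z + f z * wirt s g i z"
  unfolding wirt_def dirs_differentiable_def by (simp add: dir_deriv_mult field_simps)

lemma wirt_minus: "dirs_differentiable f z \<Longrightarrow> wirt s (\<lambda>w. - f w) i z = - wirt s f i z"
  using wirt_mult[OF dirs_differentiable_const, of f z s "- 1" i] by (simp add: wirt_const)

lemma wirt_cnj:
  "dirs_differentiable f z \<Longrightarrow> wirt s (\<lambda>w. cnj (f w)) i z = cnj (wirt (cnj s) f i z)"
  unfolding wirt_def dirs_differentiable_def by (simp add: dir_deriv_cnj)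

lemma wirt_inverse:
  assumes "dirs_differentiable f z" "f z \<noteq> 0"
  shows "wirt s (\<lambda>w. inverse (f w)) i z = - wirt s f i z * (inverse (f z) * inverse (f z))"
proof -
  have "dir_deriv e (\<lambda>w. inverse (f w)) z = - dir_deriv e f z * (inverse (f z) * inverse (f z))" for e
    using dir_deriv_inverse assms unfolding dirs_differentiable_def by blast
  then show ?thesis
    unfolding wirt_def by (simp add: algebra_simps)
qed

lemma wirt_Ln:
  assumes "dirs_differentiable f z" "f z \<notin> \<real>\<^sub>\<le>\<^sub>0"
  shows "wirt s (\<lambda>w. Ln (f w)) i z = wirt s f i z * inverse (f z)"
proof -
  have "dir_deriv e (\<lambda>w. Ln (f w)) z = dir_deriv e f z * inverse (f z)" for e
    using dir_deriv_Ln assms unfolding dirs_differentiable_def by blast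
  then show ?thesis
    unfolding wirt_def by (simp add: algebra_simps)
qed

lemma wirt_cong:
  "open U \<Longrightarrow> z \<in> U \<Longrightarrow> (\<And>w. w \<in> U \<Longrightarrow> f w = g w) \<Longrightarrow> wirt s f i z = wirt s g i z"
  unfolding wirt_def using dir_deriv_cong[of U z f g] by simp

lemma wirt_sum:
  "(\<And>q. q \<in> S \<Longrightarrow> dirs_differentiable (f q) z) \<Longrightarrow>
     wirt s (\<lambda>w. \<Sum>q\<in>S. f q w) i z = (\<Sum>q\<in>S. wirt s (f q) i z)"
  by (induction S rule: infinite_finite_induct)
     (auto simp: wirt_const wirt_add dirs_differentiable_sum)

lemmas wd_const = wirt_const[where s="- \<i>", folded wd_eq_wirt]
lemmas wd_cong = wirt_cong[where s="- \<i>", folded wd_eq_wirt]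

section \<open>Vector-valued maps, bilinear forms and holomorphy\<close>

definition wirtv :: "complex \<Rightarrow> (complex^'m \<Rightarrow> complex^'d) \<Rightarrow> 'm \<Rightarrow> complex^'m \<Rightarrow> complex^'d" where
  "wirtv s F i z = (\<chi> c. wirt s (\<lambda>w. F w $ c) i z)"

definition wdbv :: "(complex^'m \<Rightarrow> complex^'d) \<Rightarrow> 'm \<Rightarrow> complex^'m \<Rightarrow> complex^'d" where
  "wdbv F i z = (\<chi> c. wdb (\<lambda>w. F w $ c) i z)"

lemma wdv_eq_wirtv: "wdv F i z = wirtv (- \<i>) F i z"
  unfolding wdv_def wirtv_def wd_eq_wirt ..

lemma wdbv_eq_wirtv: "wdbv F i z = wirtv \<i> F i z"
  unfolding wdbv_def wirtv_def wdb_eq_wirt ..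

definition smooth_vec_on :: "(complex^'m) set \<Rightarrow> (complex^'m \<Rightarrow> complex^'d) \<Rightarrow> bool" where
  "smooth_vec_on U F \<longleftrightarrow> open U \<and> (\<forall>c. smooth_on U (\<lambda>w. F w $ c))"

definition dirs_differentiable_vec :: "(complex^'m \<Rightarrow> complex^'d) \<Rightarrow> complex^'m \<Rightarrow> bool" where
  "dirs_differentiable_vec F z \<longleftrightarrow> (\<forall>c. dirs_differentiable (\<lambda>w. F w $ c) z)"

lemma smooth_vec_on_open: "smooth_vec_on U F \<Longrightarrow> open U"
  unfolding smooth_vec_on_def by blast

lemma smooth_vec_on_component: "smooth_vec_on U F \<Longrightarrow> smooth_on U (\<lambda>w. F w $ c)"
  unfolding smooth_vec_on_def by blast

lemma smooth_vec_on_dirs_differentiable_vec: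
  "smooth_vec_on U F \<Longrightarrow> z \<in> U \<Longrightarrow> dirs_differentiable_vec F z"
  unfolding smooth_vec_on_def dirs_differentiable_vec_def
  using smooth_on_dirs_differentiable by blast

lemma smooth_vec_on_cong:
  "smooth_vec_on U F \<Longrightarrow> (\<And>w. w \<in> U \<Longrightarrow> F w = G w) \<Longrightarrow> smooth_vec_on U G"
  unfolding smooth_vec_on_def by (auto intro: smooth_on_cong)

lemma smooth_vec_on_add:
  "smooth_vec_on U F \<Longrightarrow> smooth_vec_on U G \<Longrightarrow> smooth_vec_on U (\<lambda>w. F w + G w)"
  unfolding smooth_vec_on_def using smooth_on_add by fastforce

lemma smooth_vec_on_diff:
  "smooth_vec_on U F \<Longrightarrow> smooth_vec_on U G \<Longrightarrow> smooth_vec_on U (\<lambda>w. F w - G w)"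
  unfolding smooth_vec_on_def using smooth_on_diff by fastforce

lemma smooth_vec_on_smult:
  "smooth_on U f \<Longrightarrow> smooth_vec_on U F \<Longrightarrow> smooth_vec_on U (\<lambda>w. f w *s F w)"
  unfolding smooth_vec_on_def using smooth_on_mult by fastforce

lemma smooth_vec_on_vconj: "smooth_vec_on U F \<Longrightarrow> smooth_vec_on U (\<lambda>w. vconj (F w))"
  unfolding smooth_vec_on_def vconj_def using smooth_on_cnj by fastforce

lemma smooth_vec_on_sum:
  "open U \<Longrightarrow> (\<And>q. smooth_vec_on U (F q)) \<Longrightarrow> smooth_vec_on U (\<lambda>w. \<Sum>q\<in>S. F q w)"
  unfolding smooth_vec_on_def by (auto simp: sum_component intro!: smooth_on_sum)

lemma smooth_vec_on_wdv: "smooth_vec_on U F \<Longrightarrow> smooth_vec_on U (wdv F i)"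
  unfolding smooth_vec_on_def wdv_def wd_eq_wirt using smooth_on_wirt by fastforce

lemma dirs_differentiable_vec_smult:
  "dirs_differentiable f z \<Longrightarrow> dirs_differentiable_vec G z \<Longrightarrow>
     dirs_differentiable_vec (\<lambda>w. f w *s G w) z"
  unfolding dirs_differentiable_vec_def by (simp add: dirs_differentiable_mult)

lemma dirs_differentiable_vec_vconj:
  "dirs_differentiable_vec F z \<Longrightarrow> dirs_differentiable_vec (\<lambda>w. vconj (F w)) z"
  unfolding dirs_differentiable_vec_def vconj_def by (simp add: dirs_differentiable_cnj)

lemma wirtv_add:
  "dirs_differentiable_vec F z \<Longrightarrow> dirs_differentiable_vec G z \<Longrightarrow>
     wirtv s (\<lambda>w. F w + G w) i z = wirtv s F i z + wirtv s G i z"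
  unfolding wirtv_def dirs_differentiable_vec_def by (simp add: vec_eq_iff wirt_add)

lemma wirtv_smult:
  "dirs_differentiable f z \<Longrightarrow> dirs_differentiable_vec G z \<Longrightarrow>
     wirtv s (\<lambda>w. f w *s G w) i z = wirt s f i z *s G z + f z *s wirtv s G i z"
  unfolding wirtv_def dirs_differentiable_vec_def by (simp add: vec_eq_iff wirt_mult)

lemma wirtv_vconj:
  "dirs_differentiable_vec F z \<Longrightarrow> wirtv s (\<lambda>w. vconj (F w)) i z = vconj (wirtv (cnj s) F i z)"
  unfolding wirtv_def dirs_differentiable_vec_def vconj_def by (simp add: vec_eq_iff wirt_cnj)

lemma wirtv_sum:
  "(\<And>q. dirs_differentiable_vec (F q) z) \<Longrightarrow>
     wirtv s (\<lambda>w. \<Sum>q\<in>S. F q w) i z = (\<Sum>q\<in>S. wirtv s (F q) i z)"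
  unfolding wirtv_def dirs_differentiable_vec_def by (simp add: vec_eq_iff sum_component wirt_sum)

lemma wirtv_cong:
  "open U \<Longrightarrow> z \<in> U \<Longrightarrow> (\<And>w. w \<in> U \<Longrightarrow> F w = G w) \<Longrightarrow> wirtv s F i z = wirtv s G i z"
  unfolding wirtv_def vec_eq_iff by (auto intro!: wirt_cong[of U z])

lemmas wdv_add = wirtv_add[where s="- \<i>", folded wdv_eq_wirtv]
lemmas wdv_smult = wirtv_smult[where s="- \<i>", folded wdv_eq_wirtv wd_eq_wirt]
lemmas wdv_sum = wirtv_sum[where s="- \<i>", folded wdv_eq_wirtv]
lemmas wdv_cong = wirtv_cong[where s="- \<i>", folded wdv_eq_wirtv]
lemmas wdbv_add = wirtv_add[where s="\<i>", folded wdbv_eq_wirtv]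
lemmas wdbv_smult = wirtv_smult[where s="\<i>", folded wdbv_eq_wirtv wdb_eq_wirt]

lemma wdv_vconj: "dirs_differentiable_vec F z \<Longrightarrow> wdv (\<lambda>w. vconj (F w)) i z = vconj (wdbv F i z)"
  by (simp add: wdv_eq_wirtv wdbv_eq_wirtv wirtv_vconj)

lemma wdbv_vconj: "dirs_differentiable_vec F z \<Longrightarrow> wdbv (\<lambda>w. vconj (F w)) i z = vconj (wdv F i z)"
  by (simp add: wdv_eq_wirtv wdbv_eq_wirtv wirtv_vconj)

lemma vconj_add: "vconj (x + y) = vconj x + vconj y"
  by (simp add: vconj_def vec_eq_iff)

lemma vconj_diff: "vconj (x - y) = vconj x - vconj y"
  by (simp add: vconj_def vec_eq_iff)

lemma vconj_smult: "vconj (c *s x) = cnj c *s vconj x"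
  by (simp add: vconj_def vec_eq_iff)

lemma vconj_zero [simp]: "vconj 0 = 0"
  by (simp add: vconj_def vec_eq_iff)

lemma vconj_sum: "vconj (\<Sum>q\<in>S. f q) = (\<Sum>q\<in>S. vconj (f q))"
  by (induction S rule: infinite_finite_induct) (auto simp: vconj_add)

context
  fixes Q :: "complex^'d \<Rightarrow> complex^'d \<Rightarrow> complex"
  assumes Q: "cbilinear Q"
begin

lemma cbilinear_add_left: "Q (x + y) z = Q x z + Q y z"
  using Q unfolding cbilinear_def by blast

lemma cbilinear_add_right: "Q x (y + z) = Q x y + Q x z"
  using Q unfolding cbilinear_def by blast

lemma cbilinear_smult_left: "Q (c *s x) y = c * Q x y"
  using Q unfolding cbilinear_def by blast

lemma cbilinear_smult_right: "Q x (c *s y) = c * Q x y"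
  using Q unfolding cbilinear_def by blast

lemma cbilinear_zero_left: "Q 0 y = 0"
  using cbilinear_smult_left[of 0 0 y] by simp

lemma cbilinear_zero_right: "Q x 0 = 0"
  using cbilinear_smult_right[of x 0 0] by simp

lemma cbilinear_diff_left: "Q (x - y) z = Q x z - Q y z"
  using cbilinear_add_left[of x "- y" z] cbilinear_smult_left[of "- 1" y z] by simp

lemma cbilinear_diff_right: "Q x (y - z) = Q x y - Q x z"
  using cbilinear_add_right[of x y "- z"] cbilinear_smult_right[of x "- 1" z] by simp

lemma cbilinear_sum_left: "Q (\<Sum>a\<in>S. u a) y = (\<Sum>a\<in>S. Q (u a) y)"
  by (induction S rule: infinite_finite_induct) (auto simp: cbilinear_zero_left cbilinear_add_left)

lemma cbilinear_sum_right: "Q x (\<Sum>a\<in>S. u a) = (\<Sum>a\<in>S. Q x (u a))"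
  by (induction S rule: infinite_finite_induct) (auto simp: cbilinear_zero_right cbilinear_add_right)

lemmas cbilinear_simps =
  cbilinear_add_left cbilinear_add_right cbilinear_diff_left cbilinear_diff_right
  cbilinear_smult_left cbilinear_smult_right cbilinear_sum_left cbilinear_sum_right
  cbilinear_zero_left cbilinear_zero_right

lemma cbilinear_expand: "Q x y = (\<Sum>a\<in>UNIV. \<Sum>b\<in>UNIV. x $ a * y $ b * Q (axis a 1) (axis b 1))"
proof -
  have "Q x y = Q (\<Sum>a\<in>UNIV. x $ a *s axis a 1) (\<Sum>b\<in>UNIV. y $ b *s axis b 1)"
    by (simp add: basis_expansion)
  also have "\<dots> = (\<Sum>a\<in>UNIV. \<Sum>b\<in>UNIV. x $ a * (y $ b * Q (axis a 1) (axis b 1)))"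
    by (simp add: cbilinear_simps sum_distrib_left mult.left_commute) (rule sum.swap)
  finally show ?thesis by (simp add: mult.assoc)
qed

lemma smooth_on_cbilinear:
  "smooth_vec_on U F \<Longrightarrow> smooth_vec_on U G \<Longrightarrow> smooth_on U (\<lambda>w. Q (F w) (G w))"
  by (subst cbilinear_expand)
     (intro smooth_on_sum smooth_on_mult smooth_on_const smooth_vec_on_component smooth_vec_on_open)

lemma dirs_differentiable_cbilinear:
  "dirs_differentiable_vec F z \<Longrightarrow> dirs_differentiable_vec G z \<Longrightarrow>
     dirs_differentiable (\<lambda>w. Q (F w) (G w)) z"
  unfolding dirs_differentiable_vec_def
  by (subst cbilinear_expand)
     (intro dirs_differentiable_sum dirs_differentiable_mult dirs_differentiable_const; simp)

lemma wirt_cbilinear: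
  assumes F: "dirs_differentiable_vec F z" and G: "dirs_differentiable_vec G z"
  shows "wirt s (\<lambda>w. Q (F w) (G w)) i z = Q (wirtv s F i z) (G z) + Q (F z) (wirtv s G i z)"
proof -
  have components: "dirs_differentiable (\<lambda>w. F w $ a) z" "dirs_differentiable (\<lambda>w. G w $ b) z" for a b
    using F G unfolding dirs_differentiable_vec_def by blast+
  have "wirt s (\<lambda>w. Q (F w) (G w)) i z =
        wirt s (\<lambda>w. \<Sum>a\<in>UNIV. \<Sum>b\<in>UNIV. F w $ a * G w $ b * Q (axis a 1) (axis b 1)) i z"
    by (rule arg_cong[where f="\<lambda>h. wirt s h i z"], rule ext, rule cbilinear_expand)
  also have "\<dots> = (\<Sum>a\<in>UNIV. \<Sum>b\<in>UNIV.
      (wirt s (\<lambda>w. F w $ a) i z * G z $ b + F z $ a * wirt s (\<lambda>w. G w $ b) i z) * Q (axis a 1) (axis b 1))"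
    using components by (simp add: wirt_sum wirt_mult wirt_const dirs_differentiable_sum
        dirs_differentiable_mult dirs_differentiable_const)
  also have "\<dots> = Q (wirtv s F i z) (G z) + Q (F z) (wirtv s G i z)"
    by (simp only: cbilinear_expand[of "wirtv s F i z"] cbilinear_expand[of "F z"])
       (simp add: wirtv_def sum.distrib[symmetric] distrib_right)
  finally show ?thesis .
qed

lemmas wd_cbilinear = wirt_cbilinear[where s="- \<i>", folded wd_eq_wirt wdv_eq_wirtv]
lemmas wdb_cbilinear = wirt_cbilinear[where s="\<i>", folded wdb_eq_wirt wdbv_eq_wirtv]

end

lemma cdiff_on_wd_wdb:
  assumes "cdiff_on U f" "z \<in> U"
  shows cdiff_on_wd: "wd f i z = cderiv f z (axis i 1)"
    and cdiff_on_wdb: "wdb f i z = 0"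
proof -
  have "dir_deriv e f z = cderiv f z e" for e
    using has_derivative_dir_deriv[OF cdiff_on_has_derivative[OF assms]] by simp
  moreover have "axis i \<i> = \<i> *s axis i (1::complex)"
    by (simp add: axis_def vec_eq_iff)
  then have "cderiv f z (axis i \<i>) = \<i> * cderiv f z (axis i 1)"
    using cderiv_smult[OF assms] by simp
  ultimately show "wd f i z = cderiv f z (axis i 1)" "wdb f i z = 0"
    by (simp_all add: wd_eq_wirt wdb_eq_wirt wirt_def)
qed

lemma cdiff_on_wd_cdiff_on:
  assumes "cdiff_on U f"
  shows "cdiff_on U (wd f i)"
  by (rule cdiff_on_cong[OF cdiff_on_cderiv[OF assms, of "axis i 1"]]) (simp add: cdiff_on_wd[OF assms])

lemma vector_Re_Im_expansion:
  "h = (\<Sum>i\<in>UNIV. Re (h $ i) *\<^sub>R axis i (1::complex) + Im (h $ i) *\<^sub>R axis i \<i>)"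
proof -
  have component: "(Re (h $ i) *\<^sub>R axis i (1::complex) + Im (h $ i) *\<^sub>R axis i \<i>) $ j =
                     (if i = j then h $ i else 0)" for i j
    by (cases "i = j") (simp_all add: axis_def complex_eq_iff)
  have "h $ j = (\<Sum>i\<in>UNIV. (Re (h $ i) *\<^sub>R axis i (1::complex) + Im (h $ i) *\<^sub>R axis i \<i>) $ j)"
    for j
    unfolding component by simp
  then show ?thesis
    unfolding vec_eq_iff sum_component by blast
qed

lemma complex_linear_if_Cauchy_Riemann:
  fixes L :: "complex^'m \<Rightarrow> complex"
  assumes L: "linear L" and CR: "\<And>i. L (axis i \<i>) = \<i> * L (axis i 1)"
  shows "L (c *s h) = c * L h"
proof -
  have expand: "L h = (\<Sum>i\<in>UNIV. h $ i * L (axis i 1))" for h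
  proof -
    have "L h = (\<Sum>i\<in>UNIV. Re (h $ i) *\<^sub>R L (axis i 1) + Im (h $ i) *\<^sub>R L (axis i \<i>))"
      by (subst vector_Re_Im_expansion[of h])
         (simp add: linear_sum[OF L] linear_add[OF L] linear_scale[OF L] o_def)
    also have "\<dots> = (\<Sum>i\<in>UNIV. h $ i * L (axis i 1))"
      unfolding CR scaleR_conv_of_real
      by (intro sum.cong refl) (subst (3) complex_eq, simp add: algebra_simps)
    finally show ?thesis .
  qed
  show ?thesis
    by (simp only: expand[of "c *s h"] expand[of h]) (simp add: sum_distrib_left mult.assoc)
qed

lemma holo_component_cdiff_on:
  assumes holo: "holo U F"
  shows "cdiff_on U (\<lambda>w. F w $ c)"
  unfolding cdiff_on_def
proof (intro conjI ballI)
  show "open U" using holo unfolding holo_def by blast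
  fix z assume z: "z \<in> U"
  obtain L where "(F has_derivative L) (at z)"
    using holo z unfolding holo_def differentiable_def by blast
  then have L: "((\<lambda>w. F w $ c) has_derivative (\<lambda>h. L h $ c)) (at z)"
    by (rule bounded_linear.has_derivative[OF bounded_linear_vec_nth])
  have "L (axis i 1) $ c + \<i> * L (axis i \<i>) $ c = 0" for i
  proof -
    have "wdb (\<lambda>w. F w $ c) i z = 0"
      using holo z unfolding holo_def by blast
    then show ?thesis
      using has_derivative_dir_deriv[OF L] unfolding wdb_eq_wirt wirt_def by simp
  qed
  then have "\<i> * (L (axis i 1) $ c + \<i> * L (axis i \<i>) $ c) = 0" for i
    by simp
  then have "L (axis i \<i>) $ c = \<i> * L (axis i 1) $ c" for i
    by (simp add: algebra_simps)
  with L show "\<exists>L. ((\<lambda>w. F w $ c) has_derivative L) (at z) \<and> (\<forall>a h. L (a *s h) = a * L h)"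
    using complex_linear_if_Cauchy_Riemann[OF has_derivative_linear[OF L]] by blast
qed

lemma holo_if_components_cdiff_on:
  assumes "open U" and cdiff: "\<And>c. cdiff_on U (\<lambda>w. F w $ c)"
  shows "holo U F"
proof -
  have "F differentiable at z" if "z \<in> U" for z
  proof -
    have "((\<lambda>w. \<Sum>c\<in>UNIV. F w $ c *s axis c 1) has_derivative
           (\<lambda>h. \<Sum>c\<in>UNIV. cderiv (\<lambda>w. F w $ c) z h *s axis c 1)) (at z)"
      using cdiff that
      by (intro has_derivative_sum bounded_linear.has_derivative[OF bounded_linear_vector_smult_left]
          cdiff_on_has_derivative) auto
    then have "(F has_derivative (\<lambda>h. \<Sum>c\<in>UNIV. cderiv (\<lambda>w. F w $ c) z h *s axis c 1)) (at z)"
      by (simp add: basis_expansion)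
    then show ?thesis
      unfolding differentiable_def by blast
  qed
  moreover have "wdb (\<lambda>w. F w $ c) i z = 0" if "z \<in> U" for z i c
    by (rule cdiff_on_wdb[OF cdiff that])
  ultimately show "holo U F"
    using assms(1) unfolding holo_def by blast
qed

lemma holo_iff_cdiff_on: "holo U F \<longleftrightarrow> open U \<and> (\<forall>c. cdiff_on U (\<lambda>w. F w $ c))"
  using holo_component_cdiff_on holo_if_components_cdiff_on
  by (metis cdiff_on_open holo_def)

lemma holo_smooth_vec_on: "holo U F \<Longrightarrow> smooth_vec_on U F"
  unfolding holo_iff_cdiff_on smooth_vec_on_def using cdiff_on_smooth_on by blast

lemma holo_wdbv: "holo U F \<Longrightarrow> z \<in> U \<Longrightarrow> wdbv F i z = 0"
  unfolding holo_def wdbv_def by (simp add: vec_eq_iff)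

lemma holo_wdv: "holo U F \<Longrightarrow> holo U (wdv F i)"
  unfolding holo_iff_cdiff_on wdv_def by (simp add: cdiff_on_wd_cdiff_on)

lemma matrix_mul_matrix_inv:
  assumes "invertible A"
  shows "A ** matrix_inv A = mat 1"
proof -
  have "\<exists>A'. A ** A' = mat 1 \<and> A' ** A = mat 1"
    using assms unfolding invertible_def .
  from someI_ex[OF this] show ?thesis
    unfolding matrix_inv_def by blast
qed

lemma matrix_vector_mult_axis_nth: "(A *v axis q 1) $ k = A $ k $ q"
proof -
  have "(\<Sum>j\<in>UNIV. A $ k $ j * axis q 1 $ j) = (\<Sum>j\<in>UNIV. if j = q then A $ k $ q else 0)"
    by (intro sum.cong) (auto simp: axis_def)
  then show ?thesis
    by (simp add: matrix_vector_mult_def)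
qed

section \<open>The Hodge decomposition over the chart\<close>

locale CY_chart =
  fixes n :: nat and U :: "(complex^'m) set"
    and Q :: "complex^'d \<Rightarrow> complex^'d \<Rightarrow> complex"
    and Hd :: "complex^'m \<Rightarrow> nat \<Rightarrow> (complex^'d) set"
    and \<Omega> :: "complex^'m \<Rightarrow> complex^'d"
  assumes CY: "CY_VHS n U Q Hd \<Omega>" and three_le_n: "3 \<le> n"
begin

lemmas CY_conditions = CY[unfolded CY_VHS_def]

lemma open_U: "open U"
  using CY_conditions by (rule conjunct1)

lemma Q_cbilinear: "cbilinear Q"
  using CY_conditions[THEN conjunct2] by (rule conjunct1)

lemmas CY_fibre =
  CY_conditions[THEN conjunct2, THEN conjunct2, THEN conjunct2, THEN conjunct2, THEN conjunct1, rule_format]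

lemmas CY_global = CY_conditions[THEN conjunct2, THEN conjunct2, THEN conjunct2, THEN conjunct2, THEN conjunct2]

lemma holo_Omega: "holo U \<Omega>"
  using CY_global by (rule conjunct1)

lemma Griffiths_transversality:
  "V \<subseteq> U \<Longrightarrow> holo V s \<Longrightarrow> 1 \<le> p \<Longrightarrow> p \<le> n \<Longrightarrow> (\<And>w. w \<in> V \<Longrightarrow> s w \<in> Fil Hd n w p) \<Longrightarrow>
     w \<in> V \<Longrightarrow> wdv s i w \<in> Fil Hd n w (p - 1)"
  using CY_global[THEN conjunct2] by blast

lemma Hd_subspace: "z \<in> U \<Longrightarrow> p \<le> n \<Longrightarrow> csubspace (Hd z p)"
  using CY_fibre[THEN conjunct1] by blast

lemma Hd_above_n: "z \<in> U \<Longrightarrow> n < p \<Longrightarrow> Hd z p = {0}"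
  using CY_fibre[THEN conjunct2, THEN conjunct1] by blast

lemma Hodge_decomposition: "z \<in> U \<Longrightarrow> \<exists>!f. (\<forall>p. f p \<in> Hd z p) \<and> v = (\<Sum>p\<le>n. f p)"
  using CY_fibre[THEN conjunct2, THEN conjunct2, THEN conjunct1] by blast

lemma vconj_Hd: "z \<in> U \<Longrightarrow> r \<le> n \<Longrightarrow> y \<in> Hd z r \<Longrightarrow> vconj y \<in> Hd z (n - r)"
  using CY_fibre[THEN conjunct2, THEN conjunct2, THEN conjunct2, THEN conjunct1] by blast

lemma Q_Hd_orthogonal:
  "z \<in> U \<Longrightarrow> p \<le> n \<Longrightarrow> r \<le> n \<Longrightarrow> p + r \<noteq> n \<Longrightarrow> x \<in> Hd z p \<Longrightarrow> y \<in> Hd z r \<Longrightarrow> Q x y = 0"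
  using CY_fibre[THEN conjunct2, THEN conjunct2, THEN conjunct2, THEN conjunct2, THEN conjunct1]
  by blast

lemmas CY_fibre_positivity_Omega =
  CY_fibre[THEN conjunct2, THEN conjunct2, THEN conjunct2, THEN conjunct2, THEN conjunct2]

lemma Hodge_Riemann:
  "z \<in> U \<Longrightarrow> p \<le> n \<Longrightarrow> x \<in> Hd z p \<Longrightarrow> x \<noteq> 0 \<Longrightarrow>
     Im (\<i>^p * (-\<i>)^(n-p) * Q x (vconj x)) = 0 \<and> Re (\<i>^p * (-\<i>)^(n-p) * Q x (vconj x)) > 0"
  using CY_fibre_positivity_Omega[THEN conjunct1] by blast

lemma Omega_nonzero: "z \<in> U \<Longrightarrow> \<Omega> z \<noteq> 0"
  using CY_fibre_positivity_Omega[THEN conjunct2, THEN conjunct1] .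

lemma Omega_in_Hd: "z \<in> U \<Longrightarrow> \<Omega> z \<in> Hd z n"
  using CY_fibre_positivity_Omega[THEN conjunct2, THEN conjunct2, THEN conjunct1] .

lemma Hd_n_multiple_Omega: "z \<in> U \<Longrightarrow> x \<in> Hd z n \<Longrightarrow> \<exists>c. x = c *s \<Omega> z"
  using CY_fibre_positivity_Omega[THEN conjunct2, THEN conjunct2, THEN conjunct2, THEN conjunct1]
  by blast

lemma Kodaira_Spencer:
  "z \<in> U \<Longrightarrow> v \<in> Hd z (n - 1) \<Longrightarrow>
     \<exists>!c::'m \<Rightarrow> complex. v - (\<Sum>i\<in>UNIV. c i *s wdv \<Omega> i z) \<in> Hd z n"
  using CY_fibre_positivity_Omega[THEN conjunct2, THEN conjunct2, THEN conjunct2, THEN conjunct2]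
  by blast

lemma Hd_zero: "z \<in> U \<Longrightarrow> 0 \<in> Hd z p"
  by (cases "p \<le> n") (auto simp: Hd_above_n csubspace_def dest: Hd_subspace)

lemma Hd_add: "z \<in> U \<Longrightarrow> x \<in> Hd z p \<Longrightarrow> y \<in> Hd z p \<Longrightarrow> x + y \<in> Hd z p"
  by (cases "p \<le> n") (auto simp: Hd_above_n csubspace_def dest: Hd_subspace)

lemma Hd_smult: "z \<in> U \<Longrightarrow> x \<in> Hd z p \<Longrightarrow> c *s x \<in> Hd z p"
  by (cases "p \<le> n") (auto simp: Hd_above_n csubspace_def dest: Hd_subspace)

lemma Hd_diff: "z \<in> U \<Longrightarrow> x \<in> Hd z p \<Longrightarrow> y \<in> Hd z p \<Longrightarrow> x - y \<in> Hd z p"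
  using Hd_add[of z x p "(- 1) *s y"] Hd_smult[of z y p "- 1"] by (simp add: vec_eq_iff)

lemma Hd_sum: "z \<in> U \<Longrightarrow> (\<And>q. q \<in> S \<Longrightarrow> f q \<in> Hd z p) \<Longrightarrow> (\<Sum>q\<in>S. f q) \<in> Hd z p"
  by (induction S rule: infinite_finite_induct) (auto intro: Hd_zero Hd_add)

definition hodge_comp :: "complex^'m \<Rightarrow> complex^'d \<Rightarrow> nat \<Rightarrow> complex^'d" where
  "hodge_comp z v = (THE f. (\<forall>p. f p \<in> Hd z p) \<and> v = (\<Sum>p\<le>n. f p))"

lemma hodge_comp:
  assumes "z \<in> U"
  shows hodge_comp_in_Hd: "hodge_comp z v p \<in> Hd z p"
    and sum_hodge_comp: "(\<Sum>p\<le>n. hodge_comp z v p) = v"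
  using theI'[OF Hodge_decomposition[OF assms, of v]] unfolding hodge_comp_def by auto

lemma hodge_comp_unique:
  assumes "z \<in> U" "\<And>p. f p \<in> Hd z p" "v = (\<Sum>p\<le>n. f p)"
  shows "hodge_comp z v = f"
  using Hodge_decomposition[OF assms(1), of v] hodge_comp[OF assms(1), of v] assms(2,3) by metis

lemma hodge_comp_Hd:
  assumes z: "z \<in> U" and "r \<le> n" "x \<in> Hd z r"
  shows "hodge_comp z x = (\<lambda>p. if p = r then x else 0)"
  using assms by (intro hodge_comp_unique) (auto simp: Hd_zero sum.delta)

lemma Hd_disjoint:
  assumes z: "z \<in> U" and "p \<le> n" "r \<le> n" "p \<noteq> r" "x \<in> Hd z p" "x \<in> Hd z r"
  shows "x = 0"
  using hodge_comp_Hd[OF z assms(2,5)] hodge_comp_Hd[OF z assms(3,6)] assms(4) by metis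

lemma hodge_comp_add: "z \<in> U \<Longrightarrow> hodge_comp z (v + w) p = hodge_comp z v p + hodge_comp z w p"
  by (rule fun_cong[of _ _ p], rule hodge_comp_unique)
     (auto intro: Hd_add hodge_comp_in_Hd simp: sum.distrib sum_hodge_comp)

lemma hodge_comp_smult: "z \<in> U \<Longrightarrow> hodge_comp z (c *s v) p = c *s hodge_comp z v p"
proof (rule fun_cong[of _ _ p], rule hodge_comp_unique)
  assume z: "z \<in> U"
  show "c *s hodge_comp z v p \<in> Hd z p" for p
    by (rule Hd_smult[OF z hodge_comp_in_Hd[OF z]])
  show "c *s v = (\<Sum>p\<le>n. c *s hodge_comp z v p)"
    by (subst (1) sum_hodge_comp[OF z, of v, symmetric])
       (simp add: vec_eq_iff sum_component sum_distrib_left)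
qed

lemma hodge_comp_diff: "z \<in> U \<Longrightarrow> hodge_comp z (v - w) p = hodge_comp z v p - hodge_comp z w p"
  using hodge_comp_add[of z v "(- 1) *s w" p] hodge_comp_smult[of z "- 1" w p]
  by (simp add: vec_eq_iff)

lemma hodge_comp_zero: "z \<in> U \<Longrightarrow> hodge_comp z 0 p = 0"
  by (rule fun_cong[of _ _ p], rule hodge_comp_unique) (auto intro: Hd_zero)

lemma hodge_comp_sum: "z \<in> U \<Longrightarrow> hodge_comp z (\<Sum>q\<in>S. f q) p = (\<Sum>q\<in>S. hodge_comp z (f q) p)"
  by (induction S rule: infinite_finite_induct) (auto simp: hodge_comp_zero hodge_comp_add)

lemma hodge_comp_support:
  assumes z: "z \<in> U" and "S \<subseteq> {..n}" and "\<And>r. r \<le> n \<Longrightarrow> r \<notin> S \<Longrightarrow> hodge_comp z v r = 0"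
  shows "v = (\<Sum>r\<in>S. hodge_comp z v r)"
proof -
  have "v = (\<Sum>r\<le>n. hodge_comp z v r)" by (rule sum_hodge_comp[OF z, symmetric])
  also have "\<dots> = (\<Sum>r\<in>S. hodge_comp z v r)"
    by (rule sum.mono_neutral_cong_right) (use assms in auto)
  finally show ?thesis .
qed

lemma Fil_iff_hodge_comp:
  assumes z: "z \<in> U"
  shows "v \<in> Fil Hd n z p \<longleftrightarrow> (\<forall>r<p. hodge_comp z v r = 0)"
proof
  assume "v \<in> Fil Hd n z p"
  then obtain f where f: "\<forall>r. f r \<in> Hd z r" "v = (\<Sum>r\<in>{p..n}. f r)"
    unfolding Fil_def by blast
  have "hodge_comp z v = (\<lambda>r. if p \<le> r then f r else 0)"
  proof (rule hodge_comp_unique[OF z])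
    show "(if p \<le> r then f r else 0) \<in> Hd z r" for r
      using f(1) Hd_zero[OF z] by simp
    have "(\<Sum>r\<le>n. if p \<le> r then f r else 0) = (\<Sum>r\<in>{p..n}. f r)"
      by (rule sum.mono_neutral_cong_right) auto
    then show "v = (\<Sum>r\<le>n. if p \<le> r then f r else 0)"
      using f(2) by simp
  qed
  then show "\<forall>r<p. hodge_comp z v r = 0" by simp
next
  assume "\<forall>r<p. hodge_comp z v r = 0"
  then have "v = (\<Sum>r\<in>{p..n}. hodge_comp z v r)"
    by (intro hodge_comp_support[OF z]) auto
  then show "v \<in> Fil Hd n z p"
    unfolding Fil_def using hodge_comp_in_Hd[OF z] by blast
qed

lemma Fil_add: "z \<in> U \<Longrightarrow> x \<in> Fil Hd n z p \<Longrightarrow> y \<in> Fil Hd n z p \<Longrightarrow> x + y \<in> Fil Hd n z p"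
  by (simp add: Fil_iff_hodge_comp hodge_comp_add)

lemma Fil_smult: "z \<in> U \<Longrightarrow> x \<in> Fil Hd n z p \<Longrightarrow> c *s x \<in> Fil Hd n z p"
  by (simp add: Fil_iff_hodge_comp hodge_comp_smult)

lemma Fil_diff: "z \<in> U \<Longrightarrow> x \<in> Fil Hd n z p \<Longrightarrow> y \<in> Fil Hd n z p \<Longrightarrow> x - y \<in> Fil Hd n z p"
  by (simp add: Fil_iff_hodge_comp hodge_comp_diff)

lemma Fil_sum: "z \<in> U \<Longrightarrow> (\<And>q. q \<in> S \<Longrightarrow> f q \<in> Fil Hd n z p) \<Longrightarrow> (\<Sum>q\<in>S. f q) \<in> Fil Hd n z p"
  by (simp add: Fil_iff_hodge_comp hodge_comp_sum)

lemma Fil_antimono: "z \<in> U \<Longrightarrow> q \<le> p \<Longrightarrow> x \<in> Fil Hd n z p \<Longrightarrow> x \<in> Fil Hd n z q"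
  by (simp add: Fil_iff_hodge_comp)

lemma Hd_subset_Fil: "z \<in> U \<Longrightarrow> p \<le> n \<Longrightarrow> x \<in> Hd z p \<Longrightarrow> x \<in> Fil Hd n z p"
  by (simp add: Fil_iff_hodge_comp hodge_comp_Hd)

lemma Q_vconj_hodge_comp:
  assumes z: "z \<in> U" and r: "r \<le> n" and y: "y \<in> Hd z r"
  shows "Q v (vconj y) = Q (hodge_comp z v r) (vconj y)"
proof -
  have "Q v (vconj y) = (\<Sum>p\<le>n. Q (hodge_comp z v p) (vconj y))"
    by (subst (1) sum_hodge_comp[OF z, of v, symmetric]) (rule cbilinear_sum_left[OF Q_cbilinear])
  also have "\<dots> = (\<Sum>p\<le>n. if p = r then Q (hodge_comp z v r) (vconj y) else 0)"
    using r by (intro sum.cong refl)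
      (auto intro!: Q_Hd_orthogonal[OF z _ _ _ hodge_comp_in_Hd[OF z] vconj_Hd[OF z r y]])
  also have "\<dots> = Q (hodge_comp z v r) (vconj y)"
    using r by (simp add: sum.delta)
  finally show ?thesis .
qed

lemma Hd_Q_vconj_eq_0:
  assumes "z \<in> U" "p \<le> n" "x \<in> Hd z p" "Q x (vconj x) = 0"
  shows "x = 0"
  using Hodge_Riemann[OF assms(1-3)] assms(4) by fastforce

lemma Fil_hodge_comp_support:
  assumes z: "z \<in> U" and "q \<le> n" "v \<in> Fil Hd n z p"
    and "\<And>r. q < r \<Longrightarrow> r \<le> n \<Longrightarrow> hodge_comp z v r = 0"
  shows "v = (\<Sum>r\<in>{p..q}. hodge_comp z v r)"
  using assms(2,4) Fil_iff_hodge_comp[OF z] assms(3) by (intro hodge_comp_support[OF z]) auto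

section \<open>The Weil--Petersson metric and its Christoffel symbols\<close>

abbreviation Q\<Omega> :: "complex^'m \<Rightarrow> complex" where
  "Q\<Omega> w \<equiv> Q (\<Omega> w) (vconj (\<Omega> w))"

lemma holo_wdv_Omega: "holo U (wdv \<Omega> i)"
  by (rule holo_wdv[OF holo_Omega])

lemma smooth_vec_on_Omega: "smooth_vec_on U \<Omega>"
  by (rule holo_smooth_vec_on[OF holo_Omega])

lemma smooth_vec_on_wdv_Omega: "smooth_vec_on U (wdv \<Omega> i)"
  by (rule holo_smooth_vec_on[OF holo_wdv_Omega])

lemma dirs_differentiable_vec_Omega: "w \<in> U \<Longrightarrow> dirs_differentiable_vec \<Omega> w"
  by (rule smooth_vec_on_dirs_differentiable_vec[OF smooth_vec_on_Omega])

lemma dirs_differentiable_vec_wdv_Omega: "w \<in> U \<Longrightarrow> dirs_differentiable_vec (wdv \<Omega> i) w"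
  by (rule smooth_vec_on_dirs_differentiable_vec[OF smooth_vec_on_wdv_Omega])

lemma wdv_vconj_Omega: "w \<in> U \<Longrightarrow> wdv (\<lambda>w. vconj (\<Omega> w)) i w = 0"
  by (simp add: wdv_vconj dirs_differentiable_vec_Omega holo_wdbv[OF holo_Omega])

lemma wdv_vconj_wdv_Omega: "w \<in> U \<Longrightarrow> wdv (\<lambda>w. vconj (wdv \<Omega> j w)) i w = 0"
  by (simp add: wdv_vconj dirs_differentiable_vec_wdv_Omega holo_wdbv[OF holo_wdv_Omega])

lemma smooth_on_Q\<Omega>: "smooth_on U Q\<Omega>"
  by (intro smooth_on_cbilinear[OF Q_cbilinear] smooth_vec_on_Omega smooth_vec_on_vconj)

lemma dirs_differentiable_Q\<Omega>: "w \<in> U \<Longrightarrow> dirs_differentiable Q\<Omega> w"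
  by (rule smooth_on_dirs_differentiable[OF smooth_on_Q\<Omega>])

lemma pairing_Omega_positive: "w \<in> U \<Longrightarrow> Im (\<i>^n * Q\<Omega> w) = 0 \<and> Re (\<i>^n * Q\<Omega> w) > 0"
  using Hodge_Riemann[OF _ le_refl Omega_in_Hd Omega_nonzero] by simp

lemma pairing_Omega_not_nonpos:
  assumes "w \<in> U"
  shows "\<i>^n * Q\<Omega> w \<notin> \<real>\<^sub>\<le>\<^sub>0"
proof
  assume "\<i>^n * Q\<Omega> w \<in> \<real>\<^sub>\<le>\<^sub>0"
  then obtain r where "\<i>^n * Q\<Omega> w = of_real r" "r \<le> 0"
    by (auto simp: nonpos_Reals_def)
  then show False
    using pairing_Omega_positive[OF assms] by (metis Re_complex_of_real not_less)
qed

lemma Q\<Omega>_nonzero: "w \<in> U \<Longrightarrow> Q\<Omega> w \<noteq> 0"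
  using pairing_Omega_positive by fastforce

lemma logN_eq: "logN n Q \<Omega> = (\<lambda>w. Ln (\<i>^n * Q\<Omega> w))"
  by (simp add: fun_eq_iff logN_def pairing_def)

lemma smooth_on_logN: "smooth_on U (logN n Q \<Omega>)"
  unfolding logN_eq
  by (intro smooth_on_Ln smooth_on_mult smooth_on_const open_U smooth_on_Q\<Omega> pairing_Omega_not_nonpos)

lemma wirt_logN: "w \<in> U \<Longrightarrow> wirt s (logN n Q \<Omega>) i w = wirt s Q\<Omega> i w / Q\<Omega> w"
  unfolding logN_eq
  using Q\<Omega>_nonzero dirs_differentiable_Q\<Omega> pairing_Omega_not_nonpos
  by (simp add: wirt_Ln wirt_mult wirt_const dirs_differentiable_mult dirs_differentiable_const
      field_simps)

lemma wd_Q\<Omega>: "w \<in> U \<Longrightarrow> wd Q\<Omega> i w = Q (wdv \<Omega> i w) (vconj (\<Omega> w))"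
  by (simp add: wd_cbilinear[OF Q_cbilinear] dirs_differentiable_vec_Omega
      dirs_differentiable_vec_vconj wdv_vconj_Omega cbilinear_zero_right[OF Q_cbilinear])

lemma wdb_Q\<Omega>: "w \<in> U \<Longrightarrow> wdb Q\<Omega> i w = Q (\<Omega> w) (vconj (wdv \<Omega> i w))"
  by (simp add: wdb_cbilinear[OF Q_cbilinear] dirs_differentiable_vec_Omega
      dirs_differentiable_vec_vconj wdbv_vconj holo_wdbv[OF holo_Omega] cbilinear_zero_left[OF Q_cbilinear])

lemma Kf_eq: "w \<in> U \<Longrightarrow> Kf n Q \<Omega> i w = - Q (wdv \<Omega> i w) (vconj (\<Omega> w)) / Q\<Omega> w"
  unfolding Kf_def wd_eq_wirt wirt_logN by (simp add: wd_Q\<Omega>[unfolded wd_eq_wirt])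

lemma smooth_on_Kf: "smooth_on U (Kf n Q \<Omega> i)"
  unfolding Kf_def[abs_def] wd_eq_wirt by (intro smooth_on_minus smooth_on_wirt smooth_on_logN)

lemma smooth_vec_on_D1: "smooth_vec_on U (D1 n Q \<Omega> i)"
  unfolding D1_def[abs_def]
  by (intro smooth_vec_on_add smooth_vec_on_smult smooth_vec_on_wdv_Omega smooth_on_Kf smooth_vec_on_Omega)

lemma dirs_differentiable_vec_D1: "w \<in> U \<Longrightarrow> dirs_differentiable_vec (D1 n Q \<Omega> i) w"
  by (rule smooth_vec_on_dirs_differentiable_vec[OF smooth_vec_on_D1])

lemma Q_D1_vconj_Omega: "w \<in> U \<Longrightarrow> Q (D1 n Q \<Omega> i w) (vconj (\<Omega> w)) = 0"
  unfolding D1_def using Q\<Omega>_nonzero by (simp add: cbilinear_simps[OF Q_cbilinear] Kf_eq)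

lemma Omega_in_Fil: "w \<in> U \<Longrightarrow> \<Omega> w \<in> Fil Hd n w n"
  by (rule Hd_subset_Fil[OF _ le_refl Omega_in_Hd])

lemma wdv_Omega_in_Fil: "w \<in> U \<Longrightarrow> wdv \<Omega> i w \<in> Fil Hd n w (n - 1)"
  using three_le_n Omega_in_Fil by (intro Griffiths_transversality[OF order_refl holo_Omega]) auto

lemma hodge_comp_n_eq_0:
  assumes w: "w \<in> U" and "Q v (vconj (\<Omega> w)) = 0"
  shows "hodge_comp w v n = 0"
proof -
  obtain c where c: "hodge_comp w v n = c *s \<Omega> w"
    using Hd_n_multiple_Omega[OF w hodge_comp_in_Hd[OF w]] by blast
  have "c * Q\<Omega> w = 0"
    using Q_vconj_hodge_comp[OF w le_refl Omega_in_Hd[OF w], of v] assms(2) c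
    by (simp add: cbilinear_smult_left[OF Q_cbilinear])
  then show ?thesis using c Q\<Omega>_nonzero[OF w] by simp
qed

lemma D1_in_Hd:
  assumes w: "w \<in> U"
  shows "D1 n Q \<Omega> i w \<in> Hd w (n - 1)"
proof -
  have "D1 n Q \<Omega> i w \<in> Fil Hd n w (n - 1)"
    unfolding D1_def using three_le_n
    by (intro Fil_add[OF w] wdv_Omega_in_Fil[OF w] Fil_smult[OF w] Fil_antimono[OF w _ Omega_in_Fil[OF w]])
       auto
  moreover have "r = n" if "n - 1 < r" "r \<le> n" for r
    using that by linarith
  ultimately have "D1 n Q \<Omega> i w = (\<Sum>r\<in>{n - 1..n - 1}. hodge_comp w (D1 n Q \<Omega> i w) r)"
    using hodge_comp_n_eq_0[OF w Q_D1_vconj_Omega[OF w]]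
    by (intro Fil_hodge_comp_support[OF w]) auto
  then show ?thesis
    using hodge_comp_in_Hd[OF w, of "D1 n Q \<Omega> i w" "n - 1"] by simp
qed

lemma sum_smult_D1:
  "(\<Sum>i\<in>UNIV. c i *s D1 n Q \<Omega> i w) =
     (\<Sum>i\<in>UNIV. c i *s wdv \<Omega> i w) + (\<Sum>i\<in>UNIV. c i * Kf n Q \<Omega> i w) *s \<Omega> w"
  unfolding D1_def
  by (simp add: vec_eq_iff sum_component algebra_simps sum.distrib sum_distrib_right sum_distrib_left)

text \<open>By Kodaira--Spencer, the \<open>D\<^sub>i\<Omega>\<close> span \<open>H\<^sup>n\<^sup>-\<^sup>1\<^sup>,\<^sup>1\<close>; the Hodge--Riemann relations then show
  that a class orthogonal to all \<open>vconj (D\<^sub>l\<Omega>)\<close> has no \<open>H\<^sup>n\<^sup>-\<^sup>1\<^sup>,\<^sup>1\<close>-component.\<close>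

lemma hodge_comp_n1_eq_0:
  assumes w: "w \<in> U" and orth: "\<And>l. Q v (vconj (D1 n Q \<Omega> l w)) = 0"
  shows "hodge_comp w v (n - 1) = 0"
proof -
  define y where "y = hodge_comp w v (n - 1)"
  have y: "y \<in> Hd w (n - 1)" unfolding y_def by (rule hodge_comp_in_Hd[OF w])
  obtain c where c: "y - (\<Sum>i\<in>UNIV. c i *s wdv \<Omega> i w) \<in> Hd w n"
    using Kodaira_Spencer[OF w y] by blast
  define e where "e = y - (\<Sum>i\<in>UNIV. c i *s D1 n Q \<Omega> i w)"
  have "e = (y - (\<Sum>i\<in>UNIV. c i *s wdv \<Omega> i w)) - (\<Sum>i\<in>UNIV. c i * Kf n Q \<Omega> i w) *s \<Omega> w"
    unfolding e_def sum_smult_D1 by (simp add: algebra_simps)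
  then have "e \<in> Hd w n"
    using Hd_diff[OF w c Hd_smult[OF w Omega_in_Hd[OF w]]] by simp
  moreover have "e \<in> Hd w (n - 1)"
    unfolding e_def by (intro Hd_diff[OF w y] Hd_sum[OF w] Hd_smult[OF w] D1_in_Hd[OF w])
  ultimately have "e = 0"
    using Hd_disjoint[OF w le_refl, of "n - 1"] three_le_n by auto
  then have "vconj y = (\<Sum>i\<in>UNIV. cnj (c i) *s vconj (D1 n Q \<Omega> i w))"
    by (simp add: e_def vconj_sum vconj_smult)
  moreover have "Q y (vconj (D1 n Q \<Omega> i w)) = 0" for i
    using Q_vconj_hodge_comp[OF w _ D1_in_Hd[OF w], of v i] orth[of i] three_le_n
    by (simp add: y_def)
  ultimately have "Q y (vconj y) = 0"
    by (simp add: cbilinear_sum_right[OF Q_cbilinear] cbilinear_smult_right[OF Q_cbilinear])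
  then show ?thesis
    using Hd_Q_vconj_eq_0[OF w _ y] y_def by simp
qed

lemma gWP_eq:
  assumes w: "w \<in> U"
  shows "gWP n Q \<Omega> i l w = - Q (D1 n Q \<Omega> i w) (vconj (D1 n Q \<Omega> l w)) / Q\<Omega> w"
proof -
  define B where "B = (\<lambda>w. Q (\<Omega> w) (vconj (wdv \<Omega> l w)))"
  have wdb_logN: "wdb (logN n Q \<Omega>) l w' = B w' * inverse (Q\<Omega> w')" if "w' \<in> U" for w'
    using wirt_logN[OF that] wdb_Q\<Omega>[OF that] by (simp add: wdb_eq_wirt B_def divide_inverse)
  have B: "dirs_differentiable B w"
    unfolding B_def
    by (intro dirs_differentiable_cbilinear[OF Q_cbilinear] dirs_differentiable_vec_Omega w
        dirs_differentiable_vec_vconj dirs_differentiable_vec_wdv_Omega)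
  have inv: "dirs_differentiable (\<lambda>w. inverse (Q\<Omega> w)) w"
    by (rule smooth_on_dirs_differentiable[OF smooth_on_inverse[OF smooth_on_Q\<Omega> Q\<Omega>_nonzero] w])
  have wd_B: "wd B i w = Q (wdv \<Omega> i w) (vconj (wdv \<Omega> l w))"
    unfolding B_def
    by (simp add: wd_cbilinear[OF Q_cbilinear] dirs_differentiable_vec_Omega w
        dirs_differentiable_vec_vconj dirs_differentiable_vec_wdv_Omega wdv_vconj_wdv_Omega
        cbilinear_zero_right[OF Q_cbilinear])
  have "gWP n Q \<Omega> i l w = - wd (\<lambda>w. B w * inverse (Q\<Omega> w)) i w"
    unfolding gWP_def by (simp add: wd_cong[OF open_U w wdb_logN])
  also have "\<dots> = - (wd B i w * inverse (Q\<Omega> w) +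
                      B w * (- wd Q\<Omega> i w * (inverse (Q\<Omega> w) * inverse (Q\<Omega> w))))"
    unfolding wd_eq_wirt
    by (simp add: wirt_mult[OF B inv] wirt_inverse[OF dirs_differentiable_Q\<Omega>[OF w] Q\<Omega>_nonzero[OF w]])
  also have "\<dots> = - Q (D1 n Q \<Omega> i w) (vconj (D1 n Q \<Omega> l w)) / Q\<Omega> w"
    unfolding wd_B unfolding wd_Q\<Omega>[OF w] B_def D1_def using Q\<Omega>_nonzero[OF w]
    by (simp add: cbilinear_simps[OF Q_cbilinear] vconj_add vconj_diff vconj_smult Kf_eq[OF w] field_simps)
  finally show ?thesis .
qed

lemma Q_D1_vconj_D1:
  "w \<in> U \<Longrightarrow> Q (D1 n Q \<Omega> k w) (vconj (D1 n Q \<Omega> l w)) = - Q\<Omega> w * gWP n Q \<Omega> k l w"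
  using gWP_eq Q\<Omega>_nonzero by (simp add: field_simps)

abbreviation gmat :: "complex^'m \<Rightarrow> complex^'m^'m" where
  "gmat w \<equiv> transpose (\<chi> i j. gWP n Q \<Omega> i j w)"

lemma D1_linearly_independent:
  assumes w: "w \<in> U" and "(\<Sum>j\<in>UNIV. x j *s D1 n Q \<Omega> j w) = 0"
  shows "x = (\<lambda>j. 0)"
proof -
  have "0 - (\<Sum>j\<in>UNIV. x j *s wdv \<Omega> j w) = (\<Sum>j\<in>UNIV. x j * Kf n Q \<Omega> j w) *s \<Omega> w"
    using assms(2) unfolding sum_smult_D1 by (simp add: add_eq_0_iff)
  then have "0 - (\<Sum>j\<in>UNIV. x j *s wdv \<Omega> j w) \<in> Hd w n"
    by (simp add: Hd_smult[OF w Omega_in_Hd[OF w]])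
  moreover have "0 - (\<Sum>j\<in>UNIV. 0 *s wdv \<Omega> j w) \<in> Hd w n"
    using Hd_zero[OF w] by simp
  moreover define KS where "KS = (\<lambda>c. 0 - (\<Sum>j\<in>UNIV. c j *s wdv \<Omega> j w) \<in> Hd w n)"
  ultimately have "KS x" "KS (\<lambda>j. 0)" "\<exists>!c. KS c"
    using Kodaira_Spencer[OF w Hd_zero[OF w]] by simp_all
  then show ?thesis by blast
qed

lemma gmat_mult_eq_0:
  assumes w: "w \<in> U" and x: "gmat w *v x = 0"
  shows "x = 0"
proof -
  define y where "y = (\<Sum>j\<in>UNIV. x $ j *s D1 n Q \<Omega> j w)"
  have "Q y (vconj (D1 n Q \<Omega> l w)) = 0" for l
  proof -
    have "Q y (vconj (D1 n Q \<Omega> l w)) = (\<Sum>j\<in>UNIV. x $ j * Q (D1 n Q \<Omega> j w) (vconj (D1 n Q \<Omega> l w)))"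
      unfolding y_def by (simp add: cbilinear_sum_left[OF Q_cbilinear] cbilinear_smult_left[OF Q_cbilinear])
    also have "\<dots> = - Q\<Omega> w * (\<Sum>j\<in>UNIV. gWP n Q \<Omega> j l w * x $ j)"
      by (simp add: Q_D1_vconj_D1[OF w] sum_distrib_left mult_ac)
    also have "(\<Sum>j\<in>UNIV. gWP n Q \<Omega> j l w * x $ j) = (gmat w *v x) $ l"
      by (simp add: matrix_vector_mult_def transpose_def)
    finally show ?thesis using x by simp
  qed
  then have "hodge_comp w y (n - 1) = 0"
    using x by (intro hodge_comp_n1_eq_0[OF w]) simp
  moreover have "y \<in> Hd w (n - 1)"
    unfolding y_def by (intro Hd_sum[OF w] Hd_smult[OF w] D1_in_Hd[OF w])
  ultimately have "y = 0"
    using hodge_comp_Hd[OF w _ \<open>y \<in> Hd w (n - 1)\<close>] by simp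
  then have "(\<lambda>j. x $ j) = (\<lambda>j. 0)"
    unfolding y_def by (rule D1_linearly_independent[OF w])
  then show ?thesis by (simp add: vec_eq_iff fun_eq_iff)
qed

lemma det_gmat_nonzero:
  assumes w: "w \<in> U"
  shows "det (gmat w) \<noteq> 0"
proof -
  have "inj ((*v) (gmat w))"
  proof (rule injI)
    fix a b assume "gmat w *v a = gmat w *v b"
    then have "gmat w *v (a - b) = 0" by (simp add: matrix_vector_mult_diff_distrib)
    then show "a = b" using gmat_mult_eq_0[OF w, of "a - b"] by simp
  qed
  then show ?thesis
    using det_nz_iff_inj_gen[OF matrix_vector_mul_linear_gen[of "gmat w"]] by simp
qed

lemma invertible_gmat: "w \<in> U \<Longrightarrow> invertible (gmat w)"
  by (rule invertible_det_nz[THEN iffD2, OF det_gmat_nonzero])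

lemma gmat_matrix_inv: "w \<in> U \<Longrightarrow> gmat w ** matrix_inv (gmat w) = mat 1"
  by (rule matrix_mul_matrix_inv[OF invertible_gmat])

lemma Gam_contract_gWP:
  assumes w: "w \<in> U"
  shows "(\<Sum>k\<in>UNIV. Gam n Q \<Omega> k i j w * gWP n Q \<Omega> k l w) = wd (gWP n Q \<Omega> i l) j w"
proof -
  define dg where "dg = (\<lambda>q. wd (gWP n Q \<Omega> i q) j w)"
  have "(\<Sum>k\<in>UNIV. Gam n Q \<Omega> k i j w * gWP n Q \<Omega> k l w) =
        (\<Sum>q\<in>UNIV. \<Sum>k\<in>UNIV. matrix_inv (gmat w) $ k $ q * dg q * gWP n Q \<Omega> k l w)"
    unfolding Gam_def gInv_def dg_def sum_distrib_right by (rule sum.swap)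
  also have "\<dots> = (\<Sum>q\<in>UNIV. dg q * (gmat w ** matrix_inv (gmat w)) $ l $ q)"
    by (simp add: matrix_matrix_mult_def transpose_def sum_distrib_left mult_ac)
  also have "\<dots> = (\<Sum>q\<in>UNIV. if q = l then dg l else 0)"
    using gmat_matrix_inv[OF w] by (intro sum.cong) (auto simp: mat_def)
  also have "\<dots> = dg l"
    by simp
  finally show ?thesis by (simp add: dg_def)
qed

lemma gInv_Cramer:
  assumes w: "w \<in> U"
  shows "gInv n Q \<Omega> k q w =
    det (\<chi> a b. if b = k then axis q 1 $ a else gmat w $ a $ b) / det (gmat w)"
proof -
  have "gmat w *v (matrix_inv (gmat w) *v axis q 1) = axis q 1"
    by (simp add: matrix_vector_mul_assoc gmat_matrix_inv[OF w])
  then have "matrix_inv (gmat w) *v axis q 1 =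
      (\<chi> k. det (\<chi> a b. if b = k then axis q 1 $ a else gmat w $ a $ b) / det (gmat w))"
    using cramer[OF det_gmat_nonzero[OF w]] by blast
  then have "(matrix_inv (gmat w) *v axis q 1) $ k =
      det (\<chi> a b. if b = k then axis q 1 $ a else gmat w $ a $ b) / det (gmat w)"
    by simp
  then show ?thesis
    unfolding gInv_def matrix_vector_mult_axis_nth .
qed

lemma smooth_on_gWP: "smooth_on U (gWP n Q \<Omega> i j)"
  unfolding gWP_def[abs_def] wd_eq_wirt wdb_eq_wirt
  by (intro smooth_on_minus smooth_on_wirt smooth_on_logN)

lemma smooth_on_det:
  fixes N :: "complex^'m \<Rightarrow> complex^'k^'k"
  shows "(\<And>a b. smooth_on U (\<lambda>w. N w $ a $ b)) \<Longrightarrow> smooth_on U (\<lambda>w. det (N w))"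
  unfolding det_def by (intro smooth_on_sum smooth_on_mult smooth_on_const smooth_on_prod open_U) auto

lemma smooth_on_gInv: "smooth_on U (gInv n Q \<Omega> k q)"
proof (rule smooth_on_cong)
  have "smooth_on U (\<lambda>w. if b = k then axis q 1 $ a else gmat w $ a $ b)" for a b
    by (cases "b = k") (simp_all add: transpose_def smooth_on_gWP smooth_on_const open_U)
  then show "smooth_on U (\<lambda>w. det (\<chi> a b. if b = k then axis q 1 $ a else gmat w $ a $ b) / det (gmat w))"
    by (intro smooth_on_divide smooth_on_det det_gmat_nonzero) (simp_all add: transpose_def smooth_on_gWP)
qed (simp add: gInv_Cramer)

lemma smooth_on_Gam: "smooth_on U (Gam n Q \<Omega> k i j)"
  unfolding Gam_def[abs_def] wd_eq_wirt
  by (intro smooth_on_sum open_U smooth_on_mult smooth_on_gInv smooth_on_wirt smooth_on_gWP)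

lemma smooth_vec_on_D2: "smooth_vec_on U (D2 n Q \<Omega> j i)"
  unfolding D2_def[abs_def]
  by (intro smooth_vec_on_add smooth_vec_on_diff smooth_vec_on_wdv smooth_vec_on_D1
      smooth_vec_on_sum smooth_vec_on_smult smooth_on_Gam smooth_on_Kf open_U)

section \<open>Sections of the Hodge filtration\<close>

text \<open>By the Leibniz rule this class is closed under combinations with smooth coefficients, and
  by Griffiths transversality it contains the holomorphic sections of \<open>F\<^sup>p\<close>.\<close>

definition fil_section :: "nat \<Rightarrow> (complex^'m \<Rightarrow> complex^'d) \<Rightarrow> bool" where
  "fil_section p G \<longleftrightarrow> smooth_vec_on U G \<and> (\<forall>w\<in>U. G w \<in> Fil Hd n w p) \<and>
     (\<forall>w\<in>U. \<forall>k. wdv G k w \<in> Fil Hd n w (p - 1))"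

lemma fil_sectionI:
  "smooth_vec_on U G \<Longrightarrow> (\<And>w. w \<in> U \<Longrightarrow> G w \<in> Fil Hd n w p) \<Longrightarrow>
     (\<And>w k. w \<in> U \<Longrightarrow> wdv G k w \<in> Fil Hd n w (p - 1)) \<Longrightarrow> fil_section p G"
  unfolding fil_section_def by blast

lemma fil_sectionD:
  assumes "fil_section p G"
  shows fil_section_smooth: "smooth_vec_on U G"
    and fil_section_in_Fil: "w \<in> U \<Longrightarrow> G w \<in> Fil Hd n w p"
    and fil_section_wdv_in_Fil: "w \<in> U \<Longrightarrow> wdv G k w \<in> Fil Hd n w (p - 1)"
  using assms unfolding fil_section_def by blast+

lemma fil_section_add:
  assumes F: "fil_section p F" and G: "fil_section p G"
  shows "fil_section p (\<lambda>w. F w + G w)"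
proof (rule fil_sectionI)
  show "smooth_vec_on U (\<lambda>w. F w + G w)"
    by (rule smooth_vec_on_add[OF fil_section_smooth[OF F] fil_section_smooth[OF G]])
  fix w k assume w: "w \<in> U"
  show "F w + G w \<in> Fil Hd n w p"
    by (rule Fil_add[OF w fil_section_in_Fil[OF F w] fil_section_in_Fil[OF G w]])
  have "wdv (\<lambda>w. F w + G w) k w = wdv F k w + wdv G k w"
    by (rule wdv_add[OF smooth_vec_on_dirs_differentiable_vec[OF fil_section_smooth[OF F] w]
          smooth_vec_on_dirs_differentiable_vec[OF fil_section_smooth[OF G] w]])
  then show "wdv (\<lambda>w. F w + G w) k w \<in> Fil Hd n w (p - 1)"
    using Fil_add[OF w fil_section_wdv_in_Fil[OF F w] fil_section_wdv_in_Fil[OF G w]] by simp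
qed

lemma fil_section_smult:
  assumes c: "smooth_on U c" and G: "fil_section p G"
  shows "fil_section p (\<lambda>w. c w *s G w)"
proof (rule fil_sectionI)
  show "smooth_vec_on U (\<lambda>w. c w *s G w)"
    by (rule smooth_vec_on_smult[OF c fil_section_smooth[OF G]])
  fix w k assume w: "w \<in> U"
  show "c w *s G w \<in> Fil Hd n w p"
    by (rule Fil_smult[OF w fil_section_in_Fil[OF G w]])
  have "wdv (\<lambda>w. c w *s G w) k w = wd c k w *s G w + c w *s wdv G k w"
    by (rule wdv_smult[OF smooth_on_dirs_differentiable[OF c w]
          smooth_vec_on_dirs_differentiable_vec[OF fil_section_smooth[OF G] w]])
  moreover have "G w \<in> Fil Hd n w (p - 1)"
    by (rule Fil_antimono[OF w _ fil_section_in_Fil[OF G w]]) simp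
  ultimately show "wdv (\<lambda>w. c w *s G w) k w \<in> Fil Hd n w (p - 1)"
    using fil_section_wdv_in_Fil[OF G w] by (simp add: Fil_add[OF w] Fil_smult[OF w])
qed

lemma fil_section_cong:
  assumes F: "fil_section p F" and eq: "\<And>w. w \<in> U \<Longrightarrow> F w = G w"
  shows "fil_section p G"
proof (rule fil_sectionI)
  show "smooth_vec_on U G"
    by (rule smooth_vec_on_cong[OF fil_section_smooth[OF F] eq])
  fix w k assume w: "w \<in> U"
  show "G w \<in> Fil Hd n w p"
    using fil_section_in_Fil[OF F w] eq[OF w] by simp
  show "wdv G k w \<in> Fil Hd n w (p - 1)"
    using fil_section_wdv_in_Fil[OF F w] wdv_cong[OF open_U w eq] by simp
qed

lemma fil_section_diff:
  assumes "fil_section p F" "fil_section p G"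
  shows "fil_section p (\<lambda>w. F w - G w)"
proof (rule fil_section_cong)
  show "fil_section p (\<lambda>w. F w + (- 1) *s G w)"
    by (rule fil_section_add[OF assms(1) fil_section_smult[OF smooth_on_const[OF open_U] assms(2)]])
qed (simp add: vec_eq_iff)

lemma fil_section_sum:
  assumes F: "\<And>q. fil_section p (F q)"
  shows "fil_section p (\<lambda>w. \<Sum>q\<in>(UNIV::'k::finite set). F q w)"
proof (rule fil_sectionI)
  show "smooth_vec_on U (\<lambda>w. \<Sum>q\<in>UNIV. F q w)"
    by (intro smooth_vec_on_sum open_U fil_section_smooth[OF F])
  fix w k assume w: "w \<in> U"
  show "(\<Sum>q\<in>UNIV. F q w) \<in> Fil Hd n w p"
    by (intro Fil_sum[OF w] fil_section_in_Fil[OF F w])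
  have "wdv (\<lambda>w. \<Sum>q\<in>UNIV. F q w) k w = (\<Sum>q\<in>UNIV. wdv (F q) k w)"
    by (intro wdv_sum smooth_vec_on_dirs_differentiable_vec[OF fil_section_smooth[OF F] w])
  then show "wdv (\<lambda>w. \<Sum>q\<in>(UNIV::'k set). F q w) k w \<in> Fil Hd n w (p - 1)"
    using Fil_sum[OF w fil_section_wdv_in_Fil[OF F w]] by simp
qed

lemma fil_section_antimono:
  assumes "q \<le> p" "fil_section p G"
  shows "fil_section q G"
proof (rule fil_sectionI)
  show "smooth_vec_on U G"
    by (rule fil_section_smooth[OF assms(2)])
  fix w k assume w: "w \<in> U"
  show "G w \<in> Fil Hd n w q"
    by (rule Fil_antimono[OF w assms(1) fil_section_in_Fil[OF assms(2) w]])
  show "wdv G k w \<in> Fil Hd n w (q - 1)"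
    by (rule Fil_antimono[OF w _ fil_section_wdv_in_Fil[OF assms(2) w]]) (use assms(1) in simp)
qed

lemma fil_section_holo:
  assumes "holo U G" "1 \<le> p" "p \<le> n" "\<And>w. w \<in> U \<Longrightarrow> G w \<in> Fil Hd n w p"
  shows "fil_section p G"
  using holo_smooth_vec_on[OF assms(1)] assms(4) Griffiths_transversality[OF order_refl assms]
  by (rule fil_sectionI)

lemma fil_section_Omega: "fil_section n \<Omega>"
  using three_le_n by (intro fil_section_holo[OF holo_Omega _ le_refl Omega_in_Fil]) auto

lemma fil_section_wdv_Omega: "fil_section (n - 1) (wdv \<Omega> i)"
  using three_le_n by (intro fil_section_holo[OF holo_wdv_Omega _ _ wdv_Omega_in_Fil]) auto

lemma wdv_wdv_Omega_in_Fil: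
  assumes w: "w \<in> U"
  shows "wdv (wdv \<Omega> i) j w \<in> Fil Hd n w (n - 2)"
proof -
  have "wdv (wdv \<Omega> i) j w \<in> Fil Hd n w (n - 1 - 1)"
    using three_le_n wdv_Omega_in_Fil
    by (intro Griffiths_transversality[OF order_refl holo_wdv_Omega _ _ _ w]) auto
  then show ?thesis by (simp add: numeral_2_eq_2)
qed

lemma fil_section_wdv_wdv_Omega: "fil_section (n - 2) (wdv (wdv \<Omega> i) j)"
  using three_le_n
  by (intro fil_section_holo[OF holo_wdv[OF holo_wdv_Omega] _ _ wdv_wdv_Omega_in_Fil]) auto

lemma fil_section_D1: "fil_section (n - 1) (D1 n Q \<Omega> i)"
  unfolding D1_def[abs_def]
  by (intro fil_section_add fil_section_wdv_Omega
      fil_section_antimono[OF _ fil_section_smult[OF smooth_on_Kf fil_section_Omega]]) auto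

lemma wdv_D1:
  "w \<in> U \<Longrightarrow> wdv (D1 n Q \<Omega> i) j w =
     wdv (wdv \<Omega> i) j w + wd (Kf n Q \<Omega> i) j w *s \<Omega> w + Kf n Q \<Omega> i w *s wdv \<Omega> j w"
  unfolding D1_def[abs_def]
  by (simp only: wdv_add[OF dirs_differentiable_vec_wdv_Omega dirs_differentiable_vec_smult]
      wdv_smult smooth_on_dirs_differentiable[OF smooth_on_Kf] dirs_differentiable_vec_Omega add.assoc)

lemma fil_section_wdv_D1: "fil_section (n - 2) (wdv (D1 n Q \<Omega> i) j)"
proof (rule fil_section_cong)
  show "fil_section (n - 2)
          (\<lambda>w. wdv (wdv \<Omega> i) j w + wd (Kf n Q \<Omega> i) j w *s \<Omega> w + Kf n Q \<Omega> i w *s wdv \<Omega> j w)"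
    unfolding wd_eq_wirt
    by (intro fil_section_add fil_section_wdv_wdv_Omega
        fil_section_antimono[OF _ fil_section_smult[OF smooth_on_wirt[OF smooth_on_Kf] fil_section_Omega]]
        fil_section_antimono[OF _ fil_section_smult[OF smooth_on_Kf fil_section_wdv_Omega]]) auto
qed (simp add: wdv_D1)

lemma fil_section_D2: "fil_section (n - 2) (D2 n Q \<Omega> j i)"
  unfolding D2_def[abs_def]
  by (intro fil_section_add fil_section_diff fil_section_wdv_D1 fil_section_sum
      fil_section_antimono[OF _ fil_section_smult[OF smooth_on_Gam fil_section_D1]]
      fil_section_antimono[OF _ fil_section_smult[OF smooth_on_Kf fil_section_D1]]) auto

section \<open>Orthogonality relations\<close>

lemma wdbv_D1: "w \<in> U \<Longrightarrow> wdbv (D1 n Q \<Omega> l) k w = wdb (Kf n Q \<Omega> l) k w *s \<Omega> w"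
  unfolding D1_def[abs_def]
  by (simp add: wdbv_add[OF dirs_differentiable_vec_wdv_Omega dirs_differentiable_vec_smult]
      wdbv_smult smooth_on_dirs_differentiable[OF smooth_on_Kf] dirs_differentiable_vec_Omega
      holo_wdbv[OF holo_Omega] holo_wdbv[OF holo_wdv_Omega])

lemma wd_eq_0_if_vanishing: "w \<in> U \<Longrightarrow> (\<And>w. w \<in> U \<Longrightarrow> f w = 0) \<Longrightarrow> wd f k w = 0"
  using wd_cong[OF open_U, of w f "\<lambda>w. 0"] wd_const by simp

text \<open>Orthogonality relations on \<open>U\<close> can be differentiated: \<open>\<partial>\<close> commutes with complex conjugation up
  to exchanging \<open>\<partial>\<close> and \<open>\<partial>\<close>-bar, and \<open>\<partial>\<close>-bar kills \<open>\<Omega>\<close> and maps \<open>D\<^sub>l\<Omega>\<close> into \<open>H\<^sup>n\<^sup>,\<^sup>0\<close>.\<close>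

lemma Q_wdv_vconj_Omega:
  assumes X: "smooth_vec_on U X" and orth: "\<And>w. w \<in> U \<Longrightarrow> Q (X w) (vconj (\<Omega> w)) = 0"
    and w: "w \<in> U"
  shows "Q (wdv X k w) (vconj (\<Omega> w)) = 0"
proof -
  have "wd (\<lambda>w. Q (X w) (vconj (\<Omega> w))) k w = 0"
    by (rule wd_eq_0_if_vanishing[OF w orth])
  then show ?thesis
    by (simp add: wd_cbilinear[OF Q_cbilinear] smooth_vec_on_dirs_differentiable_vec[OF X w]
        dirs_differentiable_vec_vconj dirs_differentiable_vec_Omega w wdv_vconj_Omega
        cbilinear_zero_right[OF Q_cbilinear])
qed

lemma Q_wdv_vconj_D1:
  assumes X: "smooth_vec_on U X" and orth_Omega: "\<And>w. w \<in> U \<Longrightarrow> Q (X w) (vconj (\<Omega> w)) = 0"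
    and orth_D1: "\<And>w. w \<in> U \<Longrightarrow> Q (X w) (vconj (D1 n Q \<Omega> l w)) = 0"
    and w: "w \<in> U"
  shows "Q (wdv X k w) (vconj (D1 n Q \<Omega> l w)) = 0"
proof -
  have "wd (\<lambda>w. Q (X w) (vconj (D1 n Q \<Omega> l w))) k w = 0"
    by (rule wd_eq_0_if_vanishing[OF w orth_D1])
  moreover have "Q (X w) (wdv (\<lambda>w. vconj (D1 n Q \<Omega> l w)) k w) = 0"
    using orth_Omega[OF w]
    by (simp add: wdv_vconj dirs_differentiable_vec_D1 w wdbv_D1 vconj_smult
        cbilinear_smult_right[OF Q_cbilinear])
  ultimately show ?thesis
    by (simp add: wd_cbilinear[OF Q_cbilinear] smooth_vec_on_dirs_differentiable_vec[OF X w]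
        dirs_differentiable_vec_vconj dirs_differentiable_vec_D1 w)
qed

lemma Q_wdv_D1_vconj_D1:
  assumes w: "w \<in> U"
  shows "Q (wdv (D1 n Q \<Omega> i) j w) (vconj (D1 n Q \<Omega> l w)) =
         Kf n Q \<Omega> j w * Q\<Omega> w * gWP n Q \<Omega> i l w - Q\<Omega> w * wd (gWP n Q \<Omega> i l) j w"
proof -
  have "wd (\<lambda>w. Q (D1 n Q \<Omega> i w) (vconj (D1 n Q \<Omega> l w))) j w =
          wd (\<lambda>w. (- Q\<Omega> w) * gWP n Q \<Omega> i l w) j w"
    by (rule wd_cong[OF open_U w]) (simp add: Q_D1_vconj_D1)
  also have "\<dots> = - (wd Q\<Omega> j w * gWP n Q \<Omega> i l w + Q\<Omega> w * wd (gWP n Q \<Omega> i l) j w)"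
    unfolding wd_eq_wirt
    by (simp add: wirt_minus wirt_mult dirs_differentiable_Q\<Omega> w dirs_differentiable_mult
        smooth_on_dirs_differentiable[OF smooth_on_gWP])
  also have "\<dots> = Kf n Q \<Omega> j w * Q\<Omega> w * gWP n Q \<Omega> i l w - Q\<Omega> w * wd (gWP n Q \<Omega> i l) j w"
    using Kf_eq[OF w, of j] Q\<Omega>_nonzero[OF w] by (simp add: wd_Q\<Omega>[OF w] field_simps)
  moreover have "wd (\<lambda>w. Q (D1 n Q \<Omega> i w) (vconj (D1 n Q \<Omega> l w))) j w =
                   Q (wdv (D1 n Q \<Omega> i) j w) (vconj (D1 n Q \<Omega> l w))"
    using Q_D1_vconj_Omega[OF w, of i]
    by (simp add: wd_cbilinear[OF Q_cbilinear] dirs_differentiable_vec_D1 w dirs_differentiable_vec_vconj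
        wdv_vconj wdbv_D1 vconj_smult cbilinear_smult_right[OF Q_cbilinear])
  ultimately show ?thesis by simp
qed

lemma Q_D2_vconj_Omega: "w \<in> U \<Longrightarrow> Q (D2 n Q \<Omega> j i w) (vconj (\<Omega> w)) = 0"
  unfolding D2_def
  by (simp add: cbilinear_simps[OF Q_cbilinear] Q_D1_vconj_Omega
      Q_wdv_vconj_Omega[OF smooth_vec_on_D1 Q_D1_vconj_Omega])

text \<open>This is where the Christoffel symbols enter: they make \<open>D\<^sub>jD\<^sub>i\<Omega>\<close> orthogonal to \<open>vconj (D\<^sub>l\<Omega>)\<close>.\<close>

lemma Q_D2_vconj_D1:
  assumes w: "w \<in> U"
  shows "Q (D2 n Q \<Omega> j i w) (vconj (D1 n Q \<Omega> l w)) = 0"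
proof -
  have "(\<Sum>k\<in>UNIV. Gam n Q \<Omega> k i j w * Q (D1 n Q \<Omega> k w) (vconj (D1 n Q \<Omega> l w))) =
          - Q\<Omega> w * wd (gWP n Q \<Omega> i l) j w"
    by (simp add: Q_D1_vconj_D1[OF w] Gam_contract_gWP[OF w, symmetric] sum_distrib_left mult_ac)
  then show ?thesis
    by (simp only: D2_def cbilinear_simps[OF Q_cbilinear] Q_wdv_D1_vconj_D1[OF w]
        Q_D1_vconj_D1[OF w, of i l]) (simp add: algebra_simps)
qed

lemma Tt_in_Fil:
  assumes w: "w \<in> U"
  shows "Tt n Q \<Omega> k \<alpha> i w \<in> Fil Hd n w (n - 3)"
proof -
  have "D2 n Q \<Omega> j i' w \<in> Fil Hd n w (n - 3)" for j i'
    by (rule Fil_antimono[OF w _ fil_section_in_Fil[OF fil_section_D2 w]]) simp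
  moreover have "wdv (D2 n Q \<Omega> \<alpha> i) k w \<in> Fil Hd n w (n - 3)"
    using fil_section_wdv_in_Fil[OF fil_section_D2 w] by (simp add: numeral_3_eq_3 numeral_2_eq_2)
  ultimately show ?thesis
    unfolding Tt_def by (intro Fil_diff[OF w] Fil_add[OF w] Fil_smult[OF w] Fil_sum[OF w])
qed

lemma Q_Tt_vconj_Omega: "w \<in> U \<Longrightarrow> Q (Tt n Q \<Omega> k \<alpha> i w) (vconj (\<Omega> w)) = 0"
  unfolding Tt_def
  by (simp add: cbilinear_simps[OF Q_cbilinear] Q_D2_vconj_Omega
      Q_wdv_vconj_Omega[OF smooth_vec_on_D2 Q_D2_vconj_Omega])

lemma Q_Tt_vconj_D1: "w \<in> U \<Longrightarrow> Q (Tt n Q \<Omega> k \<alpha> i w) (vconj (D1 n Q \<Omega> l w)) = 0"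
  unfolding Tt_def
  by (simp add: cbilinear_simps[OF Q_cbilinear] Q_D2_vconj_D1
      Q_wdv_vconj_D1[OF smooth_vec_on_D2 Q_D2_vconj_Omega Q_D2_vconj_D1])

lemma Tt_decomposition:
  assumes z: "z \<in> U"
  shows "\<exists>E DDD. E \<in> Hd z (n - 2) \<and> DDD \<in> Hd z (n - 3) \<and> Tt n Q \<Omega> k \<alpha> i z = E + DDD"
proof -
  let ?T = "Tt n Q \<Omega> k \<alpha> i z"
  have "?T = (\<Sum>r\<in>{n - 2, n - 3}. hodge_comp z ?T r)"
  proof (rule hodge_comp_support[OF z])
    fix r assume r: "r \<le> n" "r \<notin> {n - 2, n - 3}"
    show "hodge_comp z ?T r = 0"
    proof (cases "r < n - 3")
      case True
      then show ?thesis
        using Tt_in_Fil[OF z] Fil_iff_hodge_comp[OF z] by blast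
    next
      case False
      then have "r = n \<or> r = n - 1" using r by auto
      then show ?thesis
        using hodge_comp_n_eq_0[OF z Q_Tt_vconj_Omega[OF z]]
          hodge_comp_n1_eq_0[OF z Q_Tt_vconj_D1[OF z]] by auto
    qed
  qed auto
  then have "?T = hodge_comp z ?T (n - 2) + hodge_comp z ?T (n - 3)"
    using three_le_n by simp
  then show ?thesis
    using hodge_comp_in_Hd[OF z] by blast
qed

end

theorem lemma4p1:
  fixes n :: nat and U :: "(complex^'m) set"
    and Q :: "complex^'d \<Rightarrow> complex^'d \<Rightarrow> complex"
    and Hd :: "complex^'m \<Rightarrow> nat \<Rightarrow> (complex^'d) set"
    and \<Omega> :: "complex^'m \<Rightarrow> complex^'d"
  assumes "3 \<le> n"
    and "CY_VHS n U Q Hd \<Omega>"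
  shows "\<forall>z\<in>U. \<forall>k \<alpha> i. \<exists>E DDD. E \<in> Hd z (n - 2) \<and> DDD \<in> Hd z (n - 3) \<and>
           Tt n Q \<Omega> k \<alpha> i z = E + DDD"
proof -
  interpret CY_chart n U Q Hd \<Omega>
    using assms by unfold_locales
  show ?thesis
    using Tt_decomposition by blast
qed

end
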